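(* Let $(\Omega,\Sigma,\mu)$ be an admissible measure space. Define maps $k,k'$ on $\mathcal{J}_0(\mu)$ by $kE=(E_0)'$ and $k'E=(E')_0$. Then $(k,k')$ is a Galois connexion between $\mathcal{J}_0=\langle\mathcal{J}_0(\mu),\subset^1\rangle$ and $\mathcal{J}_0^{*}=\langle\mathcal{J}_0(\mu),\vartriangleleft\rangle$ (where $E\vartriangleleft F$ means $F\subset^1E$); explicitly, for all $E,F\in\mathcal{J}_0(\mu)$: (i) $E\subset^1F$ implies $(F_0)'\subset^1(E_0)'$; (ii) $F\subset^1E$ implies $(E')_0\subset^1(F')_0$; (iii) $((E_0)'')_0\subset^1E$; (iv) $F\subset^1((F')_0)'$.
   Context: $L_0(\mu)$: classes of measurable real functions ordered a.e. Admissible measure space: $\mu$ complete; a set whose intersection with every finite-measure measurable set is measurable is itself measurable; $\mu$ semifinite; $\mu$ has the direct sum property. A Banach ideal space (BIS) is a vector subspace $E\subset L_0(\mu)$ with complete norm such that $y\in E$, $|x|\le|y|$ a.e. imply $x\in E$, $\|x\|_E\le\|y\|_E$; maximal width: the only $z\in L_0(\mu)$ with $zy=0$ for all $y\in E$ is $z=0$. $E\subset^1F$: $E\subseteq F$ and $\|x\|_F\le\|x\|_E$ for $x\in E$. Dual $E'$: all $f\in L_0(\mu)$ with $\|f\|_{E'}=\sup\{\int_\Omega fx\,d\mu:\|x\|_E=1\}<\infty$. $E_0$: the elements $x\in E$ with order continuous norm (for every decreasing net $|x|\ge x_i\downarrow0$, $\|x_i\|_E\to0$), with the norm of $E$. A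 foundation in $E$ is an ideal of $E$ of maximal width. $\mathcal{J}_0(\mu)$: BIS $E$ of maximal width such that $E_0$ is a foundation in $E$ and $(E')_0$ is a foundation in $E'$. In the paper's definition, a pair $k:L\to L'$, $k':L'\to L$ of maps between posets is a Galois connexion if both are order preserving, $k'(k(a))<a$ for $a\in L$ and $k(k'(a'))<'a'$ for $a'\in L'$; here $L=\mathcal{J}_0$, $L'=\mathcal{J}_0^*$. *)

theory Defs
  imports "HOL-Analysis.Analysis"
begin

definition complete_ms :: "'a measure \<Rightarrow> bool" where
  "complete_ms M \<longleftrightarrow> (\<forall>A B. B \<in> null_sets M \<longrightarrow> A \<subseteq> B \<longrightarrow> A \<in> sets M)"

definition locally_determined :: "'a measure \<Rightarrow> bool" where
  "locally_determined M \<longleftrightarrow>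
     (\<forall>A. A \<subseteq> space M \<longrightarrow>
        (\<forall>B\<in>sets M. emeasure M B < \<infinity> \<longrightarrow> A \<inter> B \<in> sets M) \<longrightarrow> A \<in> sets M)"

definition semifinite_ms :: "'a measure \<Rightarrow> bool" where
  "semifinite_ms M \<longleftrightarrow>
     (\<forall>A\<in>sets M. emeasure M A = \<infinity> \<longrightarrow>
        (\<exists>B\<in>sets M. B \<subseteq> A \<and> 0 < emeasure M B \<and> emeasure M B < \<infinity>))"

definition direct_sum_property :: "'a measure \<Rightarrow> bool" where
  "direct_sum_property M \<longleftrightarrow>
     (\<exists>P. P \<subseteq> sets M \<and> (\<forall>B\<in>P. emeasure M B < \<infinity>) \<and>
          (\<forall>B\<in>P. \<forall>C\<in>P. B \<noteq> C \<longrightarrow> B \<inter> C = {}) \<and> \<Union>P = space M \<and>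
          (\<forall>A. A \<subseteq> space M \<longrightarrow> (A \<in> sets M \<longleftrightarrow> (\<forall>B\<in>P. A \<inter> B \<in> sets M))) \<and>
          (\<forall>A\<in>sets M. emeasure M A =
              (SUP F\<in>{F. finite F \<and> F \<subseteq> P}. \<Sum>B\<in>F. emeasure M (A \<inter> B))))"

definition admissible :: "'a measure \<Rightarrow> bool" where
  "admissible M \<longleftrightarrow> complete_ms M \<and> locally_determined M \<and> semifinite_ms M \<and>
                     direct_sum_property M"

text \<open>Elements of \<open>L_0(\<mu>)\<close> are represented by measurable real functions; a space is
  a set of such functions (saturated under a.e. equality by the ideal property)
  together with a norm on it.\<close>

record 'a ispace =
  elts :: "('a \<Rightarrow> real) set"
  nrm  :: "('a \<Rightarrow> real) \<Rightarrow> real"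

definition linear_sub :: "'a measure \<Rightarrow> ('a \<Rightarrow> real) set \<Rightarrow> bool" where
  "linear_sub M S \<longleftrightarrow> S \<subseteq> borel_measurable M \<and> (\<lambda>_. 0) \<in> S \<and>
     (\<forall>x\<in>S. \<forall>y\<in>S. (\<lambda>w. x w + y w) \<in> S) \<and> (\<forall>c::real. \<forall>x\<in>S. (\<lambda>w. c * x w) \<in> S)"

definition BIS :: "'a measure \<Rightarrow> 'a ispace \<Rightarrow> bool" where
  "BIS M E \<longleftrightarrow> linear_sub M (elts E) \<and>
     (\<forall>x\<in>elts E. 0 \<le> nrm E x \<and> (nrm E x = 0 \<longleftrightarrow> (AE w in M. x w = 0))) \<and>
     (\<forall>x\<in>elts E. \<forall>y\<in>elts E. nrm E (\<lambda>w. x w + y w) \<le> nrm E x + nrm E y) \<and>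
     (\<forall>c. \<forall>x\<in>elts E. nrm E (\<lambda>w. c * x w) = \<bar>c\<bar> * nrm E x) \<and>
     (\<forall>X. (\<forall>n. X n \<in> elts E) \<longrightarrow>
        (\<forall>e>0. \<exists>N. \<forall>m\<ge>N. \<forall>n\<ge>N. nrm E (\<lambda>w. X m w - X n w) < e) \<longrightarrow>
        (\<exists>x\<in>elts E. (\<lambda>n. nrm E (\<lambda>w. X n w - x w)) \<longlonglongrightarrow> 0)) \<and>
     (\<forall>x y. y \<in> elts E \<longrightarrow> x \<in> borel_measurable M \<longrightarrow> (AE w in M. \<bar>x w\<bar> \<le> \<bar>y w\<bar>) \<longrightarrow>
        x \<in> elts E \<and> nrm E x \<le> nrm E y)"

definition max_width :: "'a measure \<Rightarrow> ('a \<Rightarrow> real) set \<Rightarrow> bool" where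
  "max_width M S \<longleftrightarrow> (\<forall>z\<in>borel_measurable M.
     (\<forall>y\<in>S. AE w in M. z w * y w = 0) \<longrightarrow> (AE w in M. z w = 0))"

definition subset1 :: "'a ispace \<Rightarrow> 'a ispace \<Rightarrow> bool" where
  "subset1 E F \<longleftrightarrow> elts E \<subseteq> elts F \<and> (\<forall>x\<in>elts E. nrm F x \<le> nrm E x)"

definition dual :: "'a measure \<Rightarrow> 'a ispace \<Rightarrow> 'a ispace" where
  "dual M E = \<lparr> elts = {f \<in> borel_measurable M.
        (\<forall>x\<in>elts E. integrable M (\<lambda>w. f w * x w)) \<and>
        bdd_above {integral\<^sup>L M (\<lambda>w. f w * x w) | x. x \<in> elts E \<and> nrm E x \<le> 1}},
      nrm = (\<lambda>f. Sup {integral\<^sup>L M (\<lambda>w. f w * x w) | x. x \<in> elts E \<and> nrm E x \<le> 1}) \<rparr>"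

text \<open>Order continuity of the norm at \<open>x\<close>: a decreasing net \<open>|x| \<ge> x_i \<down> 0\<close> is
  represented by its range, a nonempty downward directed set \<open>D\<close> of functions between
  \<open>0\<close> and \<open>|x|\<close> whose infimum in \<open>L_0\<close> is \<open>0\<close>; norm convergence to 0 becomes: the infimum of the norms over D is 0.\<close>
definition ord_cont_at :: "'a measure \<Rightarrow> 'a ispace \<Rightarrow> ('a \<Rightarrow> real) \<Rightarrow> bool" where
  "ord_cont_at M E x \<longleftrightarrow>
     (\<forall>D. D \<noteq> {} \<longrightarrow> D \<subseteq> borel_measurable M \<longrightarrow>
        (\<forall>d\<in>D. AE w in M. 0 \<le> d w \<and> d w \<le> \<bar>x w\<bar>) \<longrightarrow>
        (\<forall>u\<in>D. \<forall>v\<in>D. \<exists>d\<in>D. AE w in M. d w \<le> u w \<and> d w \<le> v w) \<longrightarrow>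
        (\<forall>z\<in>borel_measurable M. (\<forall>d\<in>D. AE w in M. z w \<le> d w) \<longrightarrow> (AE w in M. z w \<le> 0)) \<longrightarrow>
        (\<forall>e>0. \<exists>d\<in>D. nrm E d < e))"

definition ocpart :: "'a measure \<Rightarrow> 'a ispace \<Rightarrow> 'a ispace" where
  "ocpart M E = \<lparr> elts = {x \<in> elts E. ord_cont_at M E x}, nrm = nrm E \<rparr>"

definition foundation :: "'a measure \<Rightarrow> 'a ispace \<Rightarrow> 'a ispace \<Rightarrow> bool" where
  "foundation M I E \<longleftrightarrow> elts I \<subseteq> elts E \<and> linear_sub M (elts I) \<and>
     (\<forall>x y. y \<in> elts I \<longrightarrow> x \<in> elts E \<longrightarrow> (AE w in M. \<bar>x w\<bar> \<le> \<bar>y w\<bar>) \<longrightarrow> x \<in> elts I) \<and>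
     max_width M (elts I)"

definition J0 :: "'a measure \<Rightarrow> 'a ispace \<Rightarrow> bool" where
  "J0 M E \<longleftrightarrow> BIS M E \<and> max_width M (elts E) \<and>
     foundation M (ocpart M E) E \<and> foundation M (ocpart M (dual M E)) (dual M E)"

end

theory Submission
  imports Defs
begin

text \<open>Parts (i), (ii) and (iv) are formal: taking the order continuous part is monotone for
  \<open>\<subset>\<^sup>1\<close> on solid spaces, taking Koethe duals is antitone, and \<open>F \<subset>\<^sup>1 F'' \<subset>\<^sup>1 ((F')\<^sub>0)'\<close>.

  For (iii), the norm of \<open>(E\<^sub>0)''\<close> first has to dominate that of \<open>E\<close> on \<open>E\<^sub>0\<close>. For
  \<open>0 \<le> y \<in> E\<^sub>0\<close>, Hahn--Banach gives a linear \<open>\<phi> \<le> \<parallel>(\<cdot>)\<^sup>+\<parallel>\<close> with \<open>\<phi>(y) = \<parallel>y\<parallel>\<close>; by order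
  continuity of \<open>y\<close> and the direct sum property, \<open>A \<mapsto> \<phi>(y \<one>\<^sub>A)\<close> is a measure carried by a
  \<open>\<sigma>\<close>-finite set, and its Radon--Nikodym density divided by \<open>y\<close> is a norming element of the unit
  ball of \<open>(E\<^sub>0)'\<close>. An element \<open>x\<close> of \<open>((E\<^sub>0)'')\<^sub>0\<close> is then approximated from below, in the
  bidual norm, by an increasing sequence in \<open>E\<^sub>0\<close> (order continuity of \<open>x\<close> and maximal width
  of \<open>E\<^sub>0\<close>). The approximants are Cauchy in \<open>E\<close>, and their limit dominates \<open>\<bar>x\<bar>\<close> because the
  maximal width of \<open>(E')\<^sub>0 \<subseteq> (E\<^sub>0)'\<close> makes the bidual norm definite.\<close>

lemma le_0_if_le_inverse_Suc: "(\<And>n. a \<le> 1 / Suc n) \<Longrightarrow> (a::real) \<le> 0"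
  using LIMSEQ_le_const[OF LIMSEQ_inverse_real_of_nat, of a] by (simp add: inverse_eq_divide)

lemma Cauchy_if_le_inverse_Suc:
  fixes d :: "nat \<Rightarrow> nat \<Rightarrow> real"
  assumes "\<And>m n. d m n < 1 / Suc n + 1 / Suc m"
  shows "\<forall>e>0. \<exists>N. \<forall>m\<ge>N. \<forall>n\<ge>N. d m n < e"
proof (intro allI impI)
  fix e :: real assume "0 < e"
  then obtain N where N: "1 / real (Suc N) < e / 2" using nat_approx_posE[of "e / 2"] by auto
  have small: "1 / real (Suc k) \<le> 1 / Suc N" if "N \<le> k" for k using that by (simp add: frac_le)
  have "d m n < e" if "N \<le> m" "N \<le> n" for m n
  proof -
    have "d m n < 1 / Suc n + 1 / Suc m" by (rule assms)
    also have "\<dots> \<le> 1 / Suc N + 1 / Suc N" using small that by (intro add_mono)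
    finally show ?thesis using N by simp
  qed
  then show "\<exists>N. \<forall>m\<ge>N. \<forall>n\<ge>N. d m n < e" by blast
qed

section \<open>Normed ideals and their Koethe duals\<close>

definition solid :: "'a measure \<Rightarrow> 'a ispace \<Rightarrow> bool" where
  "solid M A \<longleftrightarrow> (\<forall>x y. y \<in> elts A \<longrightarrow> x \<in> borel_measurable M \<longrightarrow>
     (AE w in M. \<bar>x w\<bar> \<le> \<bar>y w\<bar>) \<longrightarrow> x \<in> elts A \<and> nrm A x \<le> nrm A y)"

text \<open>A Banach ideal space without completeness and definiteness of the norm; Koethe duals are
  of this kind.\<close>
definition normed_ideal :: "'a measure \<Rightarrow> 'a ispace \<Rightarrow> bool" where
  "normed_ideal M A \<longleftrightarrow> linear_sub M (elts A) \<and> (\<forall>x\<in>elts A. 0 \<le> nrm A x) \<and>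
     (\<forall>c. \<forall>x\<in>elts A. nrm A (\<lambda>w. c * x w) = \<bar>c\<bar> * nrm A x) \<and> solid M A"

lemma solidD:
  "solid M A \<Longrightarrow> y \<in> elts A \<Longrightarrow> x \<in> borel_measurable M \<Longrightarrow> (AE w in M. \<bar>x w\<bar> \<le> \<bar>y w\<bar>) \<Longrightarrow>
    x \<in> elts A \<and> nrm A x \<le> nrm A y"
  unfolding solid_def by blast

lemma normed_idealD:
  assumes "normed_ideal M A"
  shows "elts A \<subseteq> borel_measurable M" "(\<lambda>_. 0) \<in> elts A"
    "\<And>x y. x \<in> elts A \<Longrightarrow> y \<in> elts A \<Longrightarrow> (\<lambda>w. x w + y w) \<in> elts A"
    "\<And>c x. x \<in> elts A \<Longrightarrow> (\<lambda>w. c * x w) \<in> elts A"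
    "\<And>x. x \<in> elts A \<Longrightarrow> 0 \<le> nrm A x"
    "\<And>c x. x \<in> elts A \<Longrightarrow> nrm A (\<lambda>w. c * x w) = \<bar>c\<bar> * nrm A x"
    "solid M A"
  using assms unfolding normed_ideal_def linear_sub_def by blast+

lemma normed_ideal_measurable: "normed_ideal M A \<Longrightarrow> x \<in> elts A \<Longrightarrow> x \<in> borel_measurable M"
  using normed_idealD(1) by blast

lemma normed_ideal_diff:
  "normed_ideal M A \<Longrightarrow> x \<in> elts A \<Longrightarrow> y \<in> elts A \<Longrightarrow> (\<lambda>w. x w - y w) \<in> elts A"
  using normed_idealD(3)[of M A x "\<lambda>w. -1 * y w"] normed_idealD(4)[of M A y "-1"] by simp

lemma normed_ideal_nrm_zero: "normed_ideal M A \<Longrightarrow> nrm A (\<lambda>_. 0) = 0"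
  using normed_idealD(6)[of M A "\<lambda>_. 0" 0] normed_idealD(2)[of M A] by simp

lemma normed_ideal_indicator:
  assumes A: "normed_ideal M A" and y: "y \<in> elts A" and B: "B \<in> sets M"
  shows "(\<lambda>w. y w * indicator B w) \<in> elts A"
  using solidD[OF normed_idealD(7)[OF A] y] normed_ideal_measurable[OF A y] B
  by (auto simp: indicator_def intro!: AE_I2)

lemma normed_ideal_indicator_mono:
  assumes A: "normed_ideal M A" and y: "y \<in> elts A" and "B \<subseteq> B'" "B \<in> sets M" "B' \<in> sets M"
  shows "nrm A (\<lambda>w. y w * indicator B w) \<le> nrm A (\<lambda>w. y w * indicator B' w)"
proof -
  have "AE w in M. \<bar>y w * indicator B w\<bar> \<le> \<bar>y w * indicator B' w\<bar>"
    using assms(3) by (intro AE_I2) (auto simp: indicator_def)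
  then show ?thesis
    using solidD[OF normed_idealD(7)[OF A] normed_ideal_indicator[OF A y assms(5)]]
      normed_ideal_measurable[OF A normed_ideal_indicator[OF A y assms(4)]] by blast
qed

lemma normed_ideal_max:
  assumes A: "normed_ideal M A" and y: "y \<in> elts A" "\<And>w. 0 \<le> y w" and z: "z \<in> elts A" "\<And>w. 0 \<le> z w"
  shows "(\<lambda>w. max (y w) (z w)) \<in> elts A"
proof -
  have "(\<lambda>w. max (y w) (z w)) \<in> borel_measurable M"
    using normed_ideal_measurable[OF A y(1)] normed_ideal_measurable[OF A z(1)] by simp
  moreover have "AE w in M. \<bar>max (y w) (z w)\<bar> \<le> \<bar>y w + z w\<bar>"
    using y(2) z(2) by (intro AE_I2) (simp add: max_def)
  ultimately show ?thesis using solidD[OF normed_idealD(7)[OF A] normed_idealD(3)[OF A y(1) z(1)]] by blast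
qed

lemma BIS_normed_ideal: "BIS M E \<Longrightarrow> normed_ideal M E"
  unfolding BIS_def normed_ideal_def solid_def by blast

lemma BIS_nrm_eq_0_iff: "BIS M E \<Longrightarrow> x \<in> elts E \<Longrightarrow> nrm E x = 0 \<longleftrightarrow> (AE w in M. x w = 0)"
  unfolding BIS_def by blast

lemma BIS_triangle:
  "BIS M E \<Longrightarrow> x \<in> elts E \<Longrightarrow> y \<in> elts E \<Longrightarrow> nrm E (\<lambda>w. x w + y w) \<le> nrm E x + nrm E y"
  unfolding BIS_def by blast

lemma BIS_Cauchy_convergent:
  assumes "BIS M E" and "\<And>n. X n \<in> elts E"
    and "\<forall>e>0. \<exists>N. \<forall>m\<ge>N. \<forall>n\<ge>N. nrm E (\<lambda>w. X m w - X n w) < e"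
  obtains x where "x \<in> elts E" "(\<lambda>n. nrm E (\<lambda>w. X n w - x w)) \<longlonglongrightarrow> 0"
proof -
  have "\<forall>X. (\<forall>n. X n \<in> elts E) \<longrightarrow>
      (\<forall>e>0. \<exists>N. \<forall>m\<ge>N. \<forall>n\<ge>N. nrm E (\<lambda>w. X m w - X n w) < e) \<longrightarrow>
      (\<exists>x\<in>elts E. (\<lambda>n. nrm E (\<lambda>w. X n w - x w)) \<longlonglongrightarrow> 0)"
    using assms(1) unfolding BIS_def by (elim conjE) assumption
  then show ?thesis using assms(2,3) that by blast
qed

lemma subset1_trans: "subset1 A B \<Longrightarrow> subset1 B C \<Longrightarrow> subset1 A C"
  unfolding subset1_def by (meson order_trans subsetD)

lemma nrm_ocpart [simp]: "nrm (ocpart M E) = nrm E"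
  by (simp add: ocpart_def)

lemma subset1_ocpart: "subset1 (ocpart M E) E"
  by (auto simp: subset1_def ocpart_def)

lemma ocpart_normed_ideal:
  assumes E: "normed_ideal M E" and F: "foundation M (ocpart M E) E"
  shows "normed_ideal M (ocpart M E)"
proof -
  have sub: "elts (ocpart M E) \<subseteq> elts E" and nrm: "nrm (ocpart M E) = nrm E"
    by (simp_all add: ocpart_def)
  have "solid M (ocpart M E)"
    unfolding solid_def
  proof (intro allI impI)
    fix x y assume y: "y \<in> elts (ocpart M E)" and x: "x \<in> borel_measurable M"
      and le: "AE w in M. \<bar>x w\<bar> \<le> \<bar>y w\<bar>"
    then have "x \<in> elts E \<and> nrm E x \<le> nrm E y"
      using solidD[OF normed_idealD(7)[OF E]] sub by blast
    moreover have "x \<in> elts (ocpart M E)"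
      using F y le calculation unfolding foundation_def by blast
    ultimately show "x \<in> elts (ocpart M E) \<and> nrm (ocpart M E) x \<le> nrm (ocpart M E) y"
      by (simp add: nrm)
  qed
  moreover have "linear_sub M (elts (ocpart M E))"
    using F by (simp add: foundation_def)
  ultimately show ?thesis
    using normed_idealD(5,6)[OF E] sub unfolding normed_ideal_def nrm by blast
qed

lemma ord_cont_atD:
  assumes "ord_cont_at M E x" "D \<noteq> {}" "D \<subseteq> borel_measurable M"
    "\<And>d. d \<in> D \<Longrightarrow> AE w in M. 0 \<le> d w \<and> d w \<le> \<bar>x w\<bar>"
    "\<And>u v. u \<in> D \<Longrightarrow> v \<in> D \<Longrightarrow> \<exists>d\<in>D. AE w in M. d w \<le> u w \<and> d w \<le> v w"
    "\<And>z. z \<in> borel_measurable M \<Longrightarrow> (\<And>d. d \<in> D \<Longrightarrow> AE w in M. z w \<le> d w) \<Longrightarrow>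
      AE w in M. z w \<le> 0"
    "0 < e"
  shows "\<exists>d\<in>D. nrm E d < e"
  using assms(1)[unfolded ord_cont_at_def, rule_format, OF assms(2-7)] .

lemma ocpart_mono:
  assumes S: "solid M A" and AB: "subset1 A B"
  shows "subset1 (ocpart M A) (ocpart M B)"
proof -
  have "ord_cont_at M B x" if xA: "x \<in> elts A" and oc: "ord_cont_at M A x" for x
    unfolding ord_cont_at_def
  proof (intro allI impI)
    fix D :: "('a \<Rightarrow> real) set" and e :: real
    assume D: "D \<noteq> {}" "D \<subseteq> borel_measurable M" "\<forall>d\<in>D. AE w in M. 0 \<le> d w \<and> d w \<le> \<bar>x w\<bar>"
      "\<forall>u\<in>D. \<forall>v\<in>D. \<exists>d\<in>D. AE w in M. d w \<le> u w \<and> d w \<le> v w"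
      "\<forall>z\<in>borel_measurable M. (\<forall>d\<in>D. AE w in M. z w \<le> d w) \<longrightarrow> (AE w in M. z w \<le> 0)"
      and e: "0 < e"
    obtain d where d: "d \<in> D" "nrm A d < e"
      using ord_cont_atD[OF oc D(1,2) D(3)[rule_format] D(4)[rule_format] D(5)[rule_format] e] by blast
    from D(3) d(1) have "AE w in M. 0 \<le> d w \<and> d w \<le> \<bar>x w\<bar>" by blast
    then have "AE w in M. \<bar>d w\<bar> \<le> \<bar>x w\<bar>" by eventually_elim auto
    then have "d \<in> elts A" using solidD[OF S xA] d(1) D(2) by blast
    then have "nrm B d \<le> nrm A d" using AB by (simp add: subset1_def)
    then show "\<exists>d\<in>D. nrm B d < e"
      using d by force
  qed
  moreover have "elts A \<subseteq> elts B" "\<And>x. x \<in> elts A \<Longrightarrow> nrm B x \<le> nrm A x"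
    using AB by (simp_all add: subset1_def)
  ultimately show ?thesis
    unfolding subset1_def ocpart_def by auto
qed

definition dual_values :: "'a measure \<Rightarrow> 'a ispace \<Rightarrow> ('a \<Rightarrow> real) \<Rightarrow> real set" where
  "dual_values M A f = {integral\<^sup>L M (\<lambda>w. f w * x w) | x. x \<in> elts A \<and> nrm A x \<le> 1}"

lemma dual_simps:
  "elts (dual M A) = {f \<in> borel_measurable M.
     (\<forall>x\<in>elts A. integrable M (\<lambda>w. f w * x w)) \<and> bdd_above (dual_values M A f)}"
  "nrm (dual M A) f = Sup (dual_values M A f)"
  by (simp_all add: dual_def dual_values_def)

lemma dual_memD:
  assumes "f \<in> elts (dual M A)"
  shows "f \<in> borel_measurable M" "\<And>x. x \<in> elts A \<Longrightarrow> integrable M (\<lambda>w. f w * x w)"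
  using assms by (auto simp: dual_simps)

lemma dual_upper:
  assumes "f \<in> elts (dual M A)" "x \<in> elts A" "nrm A x \<le> 1"
  shows "integral\<^sup>L M (\<lambda>w. f w * x w) \<le> nrm (dual M A) f"
  using assms unfolding dual_simps by (intro cSup_upper) (auto simp: dual_values_def)

lemma dual_memI:
  assumes A: "normed_ideal M A" and f: "f \<in> borel_measurable M"
    and int: "\<And>x. x \<in> elts A \<Longrightarrow> integrable M (\<lambda>w. f w * x w)"
    and bnd: "\<And>x. x \<in> elts A \<Longrightarrow> nrm A x \<le> 1 \<Longrightarrow> integral\<^sup>L M (\<lambda>w. f w * x w) \<le> B"
  shows "f \<in> elts (dual M A)" "nrm (dual M A) f \<le> B"
proof -
  have "bdd_above (dual_values M A f)"
    using bnd by (auto simp: bdd_above_def dual_values_def)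
  then show "f \<in> elts (dual M A)"
    using f int by (simp add: dual_simps)
  have "dual_values M A f \<noteq> {}"
    using normed_idealD(2)[OF A] normed_ideal_nrm_zero[OF A] by (force simp: dual_values_def)
  then show "nrm (dual M A) f \<le> B"
    unfolding dual_simps using bnd by (intro cSup_least) (auto simp: dual_values_def)
qed

lemma dual_zero:
  assumes A: "normed_ideal M A"
  shows "(\<lambda>_. 0) \<in> elts (dual M A)" "nrm (dual M A) (\<lambda>_. 0) = 0"
proof -
  have z: "(\<lambda>_. 0) \<in> elts (dual M A)" and "nrm (dual M A) (\<lambda>_. 0) \<le> 0"
    using dual_memI[OF A, of "\<lambda>_. 0" 0] by simp_all
  moreover have "0 \<le> nrm (dual M A) (\<lambda>_. 0)"
    using dual_upper[OF z normed_idealD(2)[OF A]] normed_ideal_nrm_zero[OF A] by simp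
  ultimately show "(\<lambda>_. 0) \<in> elts (dual M A)" "nrm (dual M A) (\<lambda>_. 0) = 0" by simp_all
qed

lemma dual_nrm_nonneg:
  assumes A: "normed_ideal M A" and f: "f \<in> elts (dual M A)"
  shows "0 \<le> nrm (dual M A) f"
  using dual_upper[OF f normed_idealD(2)[OF A]] normed_ideal_nrm_zero[OF A] by simp

lemma dual_pairing_le:
  assumes A: "normed_ideal M A" and f: "f \<in> elts (dual M A)" and x: "x \<in> elts A"
  shows "integral\<^sup>L M (\<lambda>w. f w * x w) \<le> nrm (dual M A) f * nrm A x"
proof -
  let ?I = "integral\<^sup>L M (\<lambda>w. f w * x w)"
  have scaled: "c * ?I \<le> nrm (dual M A) f" if "\<bar>c\<bar> * nrm A x \<le> 1" for c
  proof -
    have "integral\<^sup>L M (\<lambda>w. f w * (c * x w)) \<le> nrm (dual M A) f"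
      using dual_upper[OF f normed_idealD(4)[OF A x]] normed_idealD(6)[OF A x] that by simp
    then show ?thesis by (simp add: mult.left_commute)
  qed
  show ?thesis
  proof (cases "nrm A x = 0")
    case True
    have "?I \<le> 0"
    proof (rule ccontr)
      assume "\<not> ?I \<le> 0"
      moreover have "((nrm (dual M A) f + 1) / ?I) * ?I \<le> nrm (dual M A) f"
        using True by (intro scaled) simp
      ultimately show False by simp
    qed
    then show ?thesis using True by simp
  next
    case False
    then have pos: "0 < nrm A x" using normed_idealD(5)[OF A x] by simp
    have "(1 / nrm A x) * ?I \<le> nrm (dual M A) f" using pos by (intro scaled) simp
    then show ?thesis using pos by (simp add: field_simps)
  qed
qed

lemma sgn_multiplier:
  assumes A: "normed_ideal M A" and x: "x \<in> elts A" and f: "f \<in> borel_measurable M"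
  defines "x' \<equiv> \<lambda>w. sgn (f w * x w) * x w"
  shows "x' \<in> elts A" "nrm A x' \<le> nrm A x" "(\<lambda>w. f w * x' w) = (\<lambda>w. \<bar>f w * x w\<bar>)"
proof -
  have "x' \<in> borel_measurable M"
    unfolding x'_def using normed_ideal_measurable[OF A x] f by measurable
  moreover have "AE w in M. \<bar>x' w\<bar> \<le> \<bar>x w\<bar>"
    by (auto simp: x'_def abs_mult abs_sgn_eq)
  ultimately show "x' \<in> elts A" "nrm A x' \<le> nrm A x"
    using solidD[OF normed_idealD(7)[OF A] x] by auto
  show "(\<lambda>w. f w * x' w) = (\<lambda>w. \<bar>f w * x w\<bar>)"
  proof
    fix w
    have "f w * x' w = (f w * x w) * sgn (f w * x w)" by (simp add: x'_def mult_ac)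
    then show "f w * x' w = \<bar>f w * x w\<bar>" by (simp only: abs_sgn[symmetric])
  qed
qed

lemma dual_abs_pairing_le:
  assumes A: "normed_ideal M A" and f: "f \<in> elts (dual M A)" and x: "x \<in> elts A" "nrm A x \<le> 1"
  shows "integral\<^sup>L M (\<lambda>w. \<bar>f w * x w\<bar>) \<le> nrm (dual M A) f"
  using dual_upper[OF f sgn_multiplier(1)[OF A x(1) dual_memD(1)[OF f]]]
    sgn_multiplier(2,3)[OF A x(1) dual_memD(1)[OF f]] x(2) by simp

lemma dual_solid:
  assumes A: "normed_ideal M A"
  shows "solid M (dual M A)"
  unfolding solid_def
proof (intro allI impI)
  fix g f assume f: "f \<in> elts (dual M A)" and g: "g \<in> borel_measurable M"
    and le: "AE w in M. \<bar>g w\<bar> \<le> \<bar>f w\<bar>"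
  have le_abs: "AE w in M. \<bar>g w * x w\<bar> \<le> \<bar>f w * x w\<bar>" for x
    using le by eventually_elim (auto simp: abs_mult mult_right_mono)
  have int: "integrable M (\<lambda>w. g w * x w)" if x: "x \<in> elts A" for x
    using le_abs[of x] normed_ideal_measurable[OF A x] g
    by (intro Bochner_Integration.integrable_bound[OF dual_memD(2)[OF f x]]) auto
  have "integral\<^sup>L M (\<lambda>w. g w * x w) \<le> nrm (dual M A) f" if x: "x \<in> elts A" "nrm A x \<le> 1" for x
  proof -
    have "integral\<^sup>L M (\<lambda>w. g w * x w) \<le> integral\<^sup>L M (\<lambda>w. \<bar>f w * x w\<bar>)"
      using dual_memD(2)[OF f x(1)] le_abs[of x] by (intro integral_mono_AE') (auto elim: eventually_mono)
    also have "\<dots> \<le> nrm (dual M A) f" by (rule dual_abs_pairing_le[OF A f x])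
    finally show ?thesis .
  qed
  then show "g \<in> elts (dual M A) \<and> nrm (dual M A) g \<le> nrm (dual M A) f"
    using dual_memI[OF A g int] by blast
qed

lemma dual_add:
  assumes A: "normed_ideal M A" and f: "f \<in> elts (dual M A)" and g: "g \<in> elts (dual M A)"
  shows "(\<lambda>w. f w + g w) \<in> elts (dual M A)"
    "nrm (dual M A) (\<lambda>w. f w + g w) \<le> nrm (dual M A) f + nrm (dual M A) g"
proof -
  have int: "integrable M (\<lambda>w. (f w + g w) * x w)" if x: "x \<in> elts A" for x
    using dual_memD(2)[OF f x] dual_memD(2)[OF g x] by (simp add: distrib_right)
  have "integral\<^sup>L M (\<lambda>w. (f w + g w) * x w) \<le> nrm (dual M A) f + nrm (dual M A) g"
    if x: "x \<in> elts A" "nrm A x \<le> 1" for x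
    using dual_memD(2)[OF f x(1)] dual_memD(2)[OF g x(1)] dual_upper[OF f x] dual_upper[OF g x]
    by (simp add: distrib_right)
  then show "(\<lambda>w. f w + g w) \<in> elts (dual M A)"
    "nrm (dual M A) (\<lambda>w. f w + g w) \<le> nrm (dual M A) f + nrm (dual M A) g"
    using dual_memI[OF A _ int] dual_memD(1)[OF f] dual_memD(1)[OF g] by auto
qed

lemma dual_scale:
  assumes A: "normed_ideal M A" and f: "f \<in> elts (dual M A)"
  shows "(\<lambda>w. c * f w) \<in> elts (dual M A)"
    "nrm (dual M A) (\<lambda>w. c * f w) \<le> \<bar>c\<bar> * nrm (dual M A) f"
proof -
  have int: "integrable M (\<lambda>w. c * f w * x w)" if x: "x \<in> elts A" for x
    using dual_memD(2)[OF f x] by (simp add: mult.assoc)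
  have "integral\<^sup>L M (\<lambda>w. c * f w * x w) \<le> \<bar>c\<bar> * nrm (dual M A) f"
    if x: "x \<in> elts A" "nrm A x \<le> 1" for x
  proof -
    have "integral\<^sup>L M (\<lambda>w. c * f w * x w) = integral\<^sup>L M (\<lambda>w. f w * (c * x w))"
      by (simp add: algebra_simps)
    also have "\<dots> \<le> nrm (dual M A) f * (\<bar>c\<bar> * nrm A x)"
      using dual_pairing_le[OF A f normed_idealD(4)[OF A x(1)]] normed_idealD(6)[OF A x(1)] by simp
    also have "\<dots> \<le> nrm (dual M A) f * \<bar>c\<bar>"
      using dual_nrm_nonneg[OF A f] x(2) normed_idealD(5)[OF A x(1)]
      by (intro mult_left_mono) (auto intro: mult_left_le)
    finally show ?thesis by (simp add: mult.commute)
  qed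
  then show "(\<lambda>w. c * f w) \<in> elts (dual M A)" "nrm (dual M A) (\<lambda>w. c * f w) \<le> \<bar>c\<bar> * nrm (dual M A) f"
    using dual_memI[OF A _ int] dual_memD(1)[OF f] by auto
qed

lemma dual_nrm_scale:
  assumes A: "normed_ideal M A" and f: "f \<in> elts (dual M A)"
  shows "nrm (dual M A) (\<lambda>w. c * f w) = \<bar>c\<bar> * nrm (dual M A) f"
proof (cases "c = 0")
  case True
  then show ?thesis using dual_zero(2)[OF A] by simp
next
  case False
  have "nrm (dual M A) (\<lambda>w. (1 / c) * (c * f w)) \<le> \<bar>1 / c\<bar> * nrm (dual M A) (\<lambda>w. c * f w)"
    by (rule dual_scale(2)[OF A dual_scale(1)[OF A f]])
  then have "\<bar>c\<bar> * nrm (dual M A) f \<le> nrm (dual M A) (\<lambda>w. c * f w)"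
    using False by (simp add: field_simps)
  then show ?thesis using dual_scale(2)[OF A f, of c] by linarith
qed

lemma normed_ideal_dual:
  assumes A: "normed_ideal M A"
  shows "normed_ideal M (dual M A)"
  unfolding normed_ideal_def linear_sub_def
  using dual_zero(1)[OF A] dual_add(1)[OF A] dual_scale(1)[OF A] dual_memD(1)
    dual_nrm_nonneg[OF A] dual_nrm_scale[OF A] dual_solid[OF A]
  by (intro conjI ballI allI subsetI) auto

lemma dual_antimono:
  assumes A: "normed_ideal M A" and AB: "subset1 A B"
  shows "subset1 (dual M B) (dual M A)"
proof -
  have "f \<in> elts (dual M A) \<and> nrm (dual M A) f \<le> nrm (dual M B) f" if f: "f \<in> elts (dual M B)" for f
  proof -
    have int: "integrable M (\<lambda>w. f w * x w)" if "x \<in> elts A" for x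
      using AB that dual_memD(2)[OF f] by (auto simp: subset1_def)
    have "integral\<^sup>L M (\<lambda>w. f w * x w) \<le> nrm (dual M B) f" if "x \<in> elts A" "nrm A x \<le> 1" for x
      using AB that by (intro dual_upper[OF f]) (auto simp: subset1_def)
    then show ?thesis using dual_memI[OF A dual_memD(1)[OF f] int] by blast
  qed
  then show ?thesis by (auto simp: subset1_def)
qed

lemma subset1_bidual:
  assumes A: "normed_ideal M A"
  shows "subset1 A (dual M (dual M A))"
proof -
  have "x \<in> elts (dual M (dual M A)) \<and> nrm (dual M (dual M A)) x \<le> nrm A x" if x: "x \<in> elts A" for x
  proof -
    have "integral\<^sup>L M (\<lambda>w. x w * f w) \<le> nrm A x"
      if f: "f \<in> elts (dual M A)" "nrm (dual M A) f \<le> 1" for f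
    proof -
      have "integral\<^sup>L M (\<lambda>w. x w * f w) \<le> nrm (dual M A) f * nrm A x"
        using dual_pairing_le[OF A f(1) x] by (simp add: mult.commute)
      also have "\<dots> \<le> nrm A x"
        using f(2) normed_idealD(5)[OF A x] by (simp add: mult_left_le_one_le dual_nrm_nonneg[OF A f(1)])
      finally show ?thesis .
    qed
    moreover have "integrable M (\<lambda>w. x w * f w)" if "f \<in> elts (dual M A)" for f
      using dual_memD(2)[OF that x] by (simp add: mult.commute)
    ultimately show ?thesis
      using dual_memI[OF normed_ideal_dual[OF A] normed_ideal_measurable[OF A x]] by blast
  qed
  then show ?thesis by (auto simp: subset1_def)
qed

section \<open>Hahn--Banach on a space of functions\<close>

definition fun_subspace :: "('a \<Rightarrow> real) set \<Rightarrow> bool" where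
  "fun_subspace V \<longleftrightarrow> (\<lambda>_. 0) \<in> V \<and> (\<forall>x\<in>V. \<forall>y\<in>V. (\<lambda>w. x w + y w) \<in> V) \<and>
     (\<forall>c. \<forall>x\<in>V. (\<lambda>w. c * x w) \<in> V)"

definition sublinear_on :: "('a \<Rightarrow> real) set \<Rightarrow> (('a \<Rightarrow> real) \<Rightarrow> real) \<Rightarrow> bool" where
  "sublinear_on V q \<longleftrightarrow> (\<forall>x\<in>V. \<forall>y\<in>V. q (\<lambda>w. x w + y w) \<le> q x + q y) \<and>
     (\<forall>c\<ge>0. \<forall>x\<in>V. q (\<lambda>w. c * x w) = c * q x)"

lemma fun_subspaceD:
  assumes "fun_subspace V"
  shows "(\<lambda>_. 0) \<in> V" "\<And>x y. x \<in> V \<Longrightarrow> y \<in> V \<Longrightarrow> (\<lambda>w. x w + y w) \<in> V"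
    "\<And>c x. x \<in> V \<Longrightarrow> (\<lambda>w. c * x w) \<in> V"
  using assms unfolding fun_subspace_def by blast+

lemma fun_subspace_add_scaled:
  "fun_subspace V \<Longrightarrow> x \<in> V \<Longrightarrow> y \<in> V \<Longrightarrow> (\<lambda>w. x w + t * y w) \<in> V"
  using fun_subspaceD[of V] by blast

lemma sublinear_onD:
  assumes "sublinear_on V q"
  shows "\<And>x y. x \<in> V \<Longrightarrow> y \<in> V \<Longrightarrow> q (\<lambda>w. x w + y w) \<le> q x + q y"
    "\<And>c x. 0 \<le> c \<Longrightarrow> x \<in> V \<Longrightarrow> q (\<lambda>w. c * x w) = c * q x"
  using assms unfolding sublinear_on_def by blast+

lemma sublinear_on_zero: "fun_subspace V \<Longrightarrow> sublinear_on V q \<Longrightarrow> q (\<lambda>_. 0) = 0"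
  using sublinear_onD(2)[of V q 0 "\<lambda>_. 0"] fun_subspaceD(1)[of V] by simp

lemma sublinear_on_neg_le:
  assumes V: "fun_subspace V" and q: "sublinear_on V q" and x: "x \<in> V"
  shows "- q (\<lambda>w. -1 * x w) \<le> q x"
proof -
  have "q (\<lambda>w. x w + -1 * x w) \<le> q x + q (\<lambda>w. -1 * x w)"
    by (rule sublinear_onD(1)[OF q x fun_subspaceD(3)[OF V x]])
  then show ?thesis using sublinear_on_zero[OF V q] by simp
qed

lemma sublinear_on_cong:
  assumes V: "fun_subspace V" and q: "sublinear_on V q" and eq: "\<And>x. x \<in> V \<Longrightarrow> q' x = q x"
  shows "sublinear_on V q'"
  using sublinear_onD[OF q] fun_subspaceD(2,3)[OF V] by (simp add: sublinear_on_def eq)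

lemma cINF_const_mult:
  fixes f :: "'b \<Rightarrow> real"
  assumes c: "0 < c" and C: "C \<noteq> {}" and bdd: "bdd_below (f ` C)"
  shows "(INF i\<in>C. c * f i) = c * (INF i\<in>C. f i)"
proof (rule antisym)
  have "(INF i\<in>C. c * f i) / c \<le> (INF i\<in>C. f i)"
  proof (rule cINF_greatest[OF C])
    fix i assume i: "i \<in> C"
    obtain m where "\<And>i. i \<in> C \<Longrightarrow> m \<le> f i" using bdd by (auto simp: bdd_below_def)
    then have "bdd_below ((\<lambda>i. c * f i) ` C)" using c by (intro bdd_belowI[of _ "c * m"]) auto
    from cINF_lower[OF this i] have "(INF i\<in>C. c * f i) \<le> c * f i" .
    then show "(INF i\<in>C. c * f i) / c \<le> f i" using c by (simp add: divide_le_eq mult.commute)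
  qed
  then show "(INF i\<in>C. c * f i) \<le> c * (INF i\<in>C. f i)"
    using c by (simp add: divide_le_eq mult.commute)
  show "c * (INF i\<in>C. f i) \<le> (INF i\<in>C. c * f i)"
    using c bdd by (intro cINF_greatest[OF C]) (auto intro: cINF_lower)
qed

text \<open>The shift of the Zorn argument for Hahn--Banach; its values outside \<open>V\<close> are irrelevant
  and set to \<open>0\<close>.\<close>
definition sublinear_shift ::
    "('a \<Rightarrow> real) set \<Rightarrow> (('a \<Rightarrow> real) \<Rightarrow> real) \<Rightarrow> ('a \<Rightarrow> real) \<Rightarrow> ('a \<Rightarrow> real) \<Rightarrow> real" where
  "sublinear_shift V q a z =
     (if z \<in> V then (INF t\<in>{0..}. q (\<lambda>w. z w + t * a w) - t * q a) else 0)"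

context
  fixes V :: "('a \<Rightarrow> real) set" and q :: "('a \<Rightarrow> real) \<Rightarrow> real" and a :: "'a \<Rightarrow> real"
  assumes V: "fun_subspace V" and q: "sublinear_on V q" and a: "a \<in> V"
begin

private abbreviation (input) "g z t \<equiv> q (\<lambda>w. z w + t * a w) - t * q a"

private lemma shift_bdd_below: "z \<in> V \<Longrightarrow> bdd_below (g z ` {0..})"
proof -
  assume z: "z \<in> V"
  have "- q (\<lambda>w. -1 * z w) \<le> g z t" if t: "t \<ge> 0" for t
  proof -
    have "q (\<lambda>w. (z w + t * a w) + -1 * z w) \<le> q (\<lambda>w. z w + t * a w) + q (\<lambda>w. -1 * z w)"
      by (rule sublinear_onD(1)[OF q fun_subspace_add_scaled[OF V z a] fun_subspaceD(3)[OF V z]])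
    then show ?thesis using sublinear_onD(2)[OF q t a] by simp
  qed
  then show ?thesis unfolding bdd_below_def by blast
qed

private lemma shift_eq: "z \<in> V \<Longrightarrow> sublinear_shift V q a z = (INF t\<in>{0..}. g z t)"
  by (simp add: sublinear_shift_def)

private lemma shift_le: "z \<in> V \<Longrightarrow> 0 \<le> t \<Longrightarrow> sublinear_shift V q a z \<le> g z t"
  unfolding shift_eq by (rule cINF_lower[OF shift_bdd_below]) auto

lemma sublinear_shift_le: "z \<in> V \<Longrightarrow> sublinear_shift V q a z \<le> q z"
  using shift_le[of z 0] by simp

lemma sublinear_shift_le_diff: "z \<in> V \<Longrightarrow> sublinear_shift V q a z \<le> q (\<lambda>w. z w + a w) - q a"
  using shift_le[of z 1] by simp

lemma sublinear_shift_subadditive: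
  assumes x: "x \<in> V" and y: "y \<in> V"
  shows "sublinear_shift V q a (\<lambda>w. x w + y w) \<le> sublinear_shift V q a x + sublinear_shift V q a y"
proof -
  have xy: "(\<lambda>w. x w + y w) \<in> V" using fun_subspaceD(2)[OF V x y] .
  have "sublinear_shift V q a (\<lambda>w. x w + y w) - g y t \<le> g x s" if s: "s \<ge> 0" and t: "t \<ge> 0" for s t
  proof -
    have "(\<lambda>w. (x w + y w) + (s + t) * a w) = (\<lambda>w. (x w + s * a w) + (y w + t * a w))"
      by (auto simp: algebra_simps)
    then have "q (\<lambda>w. (x w + y w) + (s + t) * a w) \<le> q (\<lambda>w. x w + s * a w) + q (\<lambda>w. y w + t * a w)"
      using sublinear_onD(1)[OF q fun_subspace_add_scaled[OF V x a] fun_subspace_add_scaled[OF V y a]]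
      by simp
    moreover have "sublinear_shift V q a (\<lambda>w. x w + y w) \<le> g (\<lambda>w. x w + y w) (s + t)"
      using shift_le[OF xy] s t by simp
    ultimately show ?thesis by (simp add: algebra_simps)
  qed
  then have "sublinear_shift V q a (\<lambda>w. x w + y w) - g y t \<le> sublinear_shift V q a x" if "t \<ge> 0" for t
    using that unfolding shift_eq[OF x] by (intro cINF_greatest) auto
  then have "sublinear_shift V q a (\<lambda>w. x w + y w) - sublinear_shift V q a x \<le> sublinear_shift V q a y"
    unfolding shift_eq[OF y] by (intro cINF_greatest) (auto simp: algebra_simps)
  then show ?thesis by simp
qed

lemma sublinear_shift_pos_homogeneous:
  assumes c: "0 \<le> c" and x: "x \<in> V"
  shows "sublinear_shift V q a (\<lambda>w. c * x w) = c * sublinear_shift V q a x"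
proof (cases "c = 0")
  case True
  have "g (\<lambda>w. c * x w) t = 0" if "t \<ge> 0" for t
    using True sublinear_onD(2)[OF q that a] by simp
  then have "g (\<lambda>w. c * x w) ` {0..} = {0}" by force
  then show ?thesis using True fun_subspaceD(1)[OF V] by (simp add: shift_eq)
next
  case False
  then have cp: "0 < c" using c by simp
  have img: "(\<lambda>s. c * s) ` {0..} = {0::real..}"
  proof (intro set_eqI iffI)
    show "t \<in> {0..}" if "t \<in> (\<lambda>s. c * s) ` {0..}" for t
      using that cp by auto
    show "t \<in> (\<lambda>s. c * s) ` {0..}" if "t \<in> {0..}" for t
      using that cp by (intro image_eqI[of _ _ "t / c"]) auto
  qed
  have g_scale: "g (\<lambda>w. c * x w) (c * s) = c * g x s" if "s \<ge> 0" for s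
  proof -
    have "(\<lambda>w. c * x w + (c * s) * a w) = (\<lambda>w. c * (x w + s * a w))"
      by (auto simp: algebra_simps)
    then show ?thesis
      using sublinear_onD(2)[OF q c fun_subspace_add_scaled[OF V x a, of s]] by (simp add: algebra_simps)
  qed
  have "sublinear_shift V q a (\<lambda>w. c * x w) = (INF t\<in>(\<lambda>s. c * s) ` {0..}. g (\<lambda>w. c * x w) t)"
    unfolding shift_eq[OF fun_subspaceD(3)[OF V x]] img ..
  also have "\<dots> = (INF s\<in>{0..}. g (\<lambda>w. c * x w) (c * s))"
    by (simp add: image_image)
  also have "\<dots> = (INF s\<in>{0..}. c * g x s)"
    using g_scale by (intro INF_cong) auto
  also have "\<dots> = c * sublinear_shift V q a x"
    unfolding shift_eq[OF x] by (rule cINF_const_mult[OF cp _ shift_bdd_below[OF x]]) auto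
  finally show ?thesis .
qed

lemma sublinear_on_shift: "sublinear_on V (sublinear_shift V q a)"
  unfolding sublinear_on_def
  using sublinear_shift_subadditive sublinear_shift_pos_homogeneous by blast

end

lemma chain_INF_bdd_below:
  assumes V: "fun_subspace V" and sub: "\<forall>q\<in>C. sublinear_on V q" and le: "\<forall>q\<in>C. \<forall>x\<in>V. q x \<le> p x"
    and x: "x \<in> V"
  shows "bdd_below ((\<lambda>q. q x) ` C)"
proof -
  have "- p (\<lambda>w. -1 * x w) \<le> q x" if q: "q \<in> C" for q
    using sublinear_on_neg_le[OF V bspec[OF sub q] x] le q fun_subspaceD(3)[OF V x, of "-1"] by force
  then show ?thesis unfolding bdd_below_def by blast
qed

lemma chain_INF_subadditive:
  assumes V: "fun_subspace V" and C: "C \<noteq> {}"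
    and sub: "\<forall>q\<in>C. sublinear_on V q" and le: "\<forall>q\<in>C. \<forall>x\<in>V. q x \<le> p x"
    and chain: "\<forall>q1\<in>C. \<forall>q2\<in>C. (\<forall>x\<in>V. q1 x \<le> q2 x) \<or> (\<forall>x\<in>V. q2 x \<le> q1 x)"
    and x: "x \<in> V" and y: "y \<in> V"
  shows "(INF q\<in>C. q (\<lambda>w. x w + y w)) \<le> (INF q\<in>C. q x) + (INF q\<in>C. q y)"
proof -
  have xy: "(\<lambda>w. x w + y w) \<in> V" using fun_subspaceD(2)[OF V x y] .
  have sum: "(INF q\<in>C. q (\<lambda>w. x w + y w)) \<le> q x + q y" if "q \<in> C" for q
    using cINF_lower[OF chain_INF_bdd_below[OF V sub le xy] that] sublinear_onD(1)[OF bspec[OF sub that] x y]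
    by linarith
  have key: "(INF q\<in>C. q (\<lambda>w. x w + y w)) \<le> q1 x + q2 y" if q1: "q1 \<in> C" and q2: "q2 \<in> C" for q1 q2
    using bspec[OF bspec[OF chain q1] q2]
  proof
    assume "\<forall>x\<in>V. q1 x \<le> q2 x"
    then show ?thesis using sum[OF q1] y by fastforce
  next
    assume "\<forall>x\<in>V. q2 x \<le> q1 x"
    then show ?thesis using sum[OF q2] x by fastforce
  qed
  have "(INF q\<in>C. q (\<lambda>w. x w + y w)) - q2 y \<le> (INF q\<in>C. q x)" if q2: "q2 \<in> C" for q2
  proof (rule cINF_greatest[OF C])
    fix q1 assume "q1 \<in> C"
    then show "(INF q\<in>C. q (\<lambda>w. x w + y w)) - q2 y \<le> q1 x" using key[OF _ q2] by fastforce
  qed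
  then have "(INF q\<in>C. q (\<lambda>w. x w + y w)) - (INF q\<in>C. q x) \<le> (INF q\<in>C. q y)"
    by (intro cINF_greatest[OF C]) (simp add: algebra_simps)
  then show ?thesis by simp
qed

lemma sublinear_on_INF_chain:
  assumes V: "fun_subspace V" and C: "C \<noteq> {}"
    and sub: "\<forall>q\<in>C. sublinear_on V q" and le: "\<forall>q\<in>C. \<forall>x\<in>V. q x \<le> p x"
    and chain: "\<forall>q1\<in>C. \<forall>q2\<in>C. (\<forall>x\<in>V. q1 x \<le> q2 x) \<or> (\<forall>x\<in>V. q2 x \<le> q1 x)"
  shows "sublinear_on V (\<lambda>x. INF q\<in>C. q x)" "\<And>x q. x \<in> V \<Longrightarrow> q \<in> C \<Longrightarrow> (INF q\<in>C. q x) \<le> q x"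
proof -
  show "(INF q\<in>C. q x) \<le> q x" if "x \<in> V" "q \<in> C" for x q
    using cINF_lower[OF chain_INF_bdd_below[OF V sub le that(1)] that(2)] .
  have "(INF q\<in>C. q (\<lambda>w. c * x w)) = c * (INF q\<in>C. q x)" if c: "0 \<le> c" and x: "x \<in> V" for c x
  proof -
    have "(INF q\<in>C. q (\<lambda>w. c * x w)) = (INF q\<in>C. c * q x)"
      using sub sublinear_onD(2)[OF _ c x] by (intro INF_cong) auto
    also have "\<dots> = c * (INF q\<in>C. q x)"
    proof (cases "c = 0")
      case True
      then show ?thesis using C by simp
    next
      case False
      then show ?thesis using cINF_const_mult[OF _ C chain_INF_bdd_below[OF V sub le x], of c] c by simp
    qed
    finally show ?thesis .
  qed
  then show "sublinear_on V (\<lambda>x. INF q\<in>C. q x)"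
    unfolding sublinear_on_def using chain_INF_subadditive[OF V C sub le chain] by blast
qed

text \<open>Functionals are set to \<open>0\<close> outside \<open>V\<close>, so that comparison on \<open>V\<close> is a partial order.\<close>
definition sublinear_below :: "('a \<Rightarrow> real) set \<Rightarrow> (('a \<Rightarrow> real) \<Rightarrow> real) \<Rightarrow> (('a \<Rightarrow> real) \<Rightarrow> real) set" where
  "sublinear_below V p = {q. sublinear_on V q \<and> (\<forall>x\<in>V. q x \<le> p x) \<and> (\<forall>x. x \<notin> V \<longrightarrow> q x = 0)}"

lemma sublinear_below_chain_bound:
  assumes V: "fun_subspace V" and p: "sublinear_on V p"
    and C: "C \<in> Chains (relation_of (\<lambda>q1 q2. \<forall>x\<in>V. q2 x \<le> q1 x) (sublinear_below V p))"
  shows "\<exists>u\<in>sublinear_below V p. \<forall>q\<in>C. \<forall>x\<in>V. u x \<le> q x"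
proof (cases "C = {}")
  case True
  have "(\<lambda>x. if x \<in> V then p x else 0) \<in> sublinear_below V p"
    using sublinear_on_cong[OF V p] by (simp add: sublinear_below_def)
  then show ?thesis using True by blast
next
  case ne: False
  have CA: "C \<subseteq> sublinear_below V p" using Chains_relation_of[OF C] .
  have cmp: "\<forall>q1\<in>C. \<forall>q2\<in>C. (\<forall>x\<in>V. q1 x \<le> q2 x) \<or> (\<forall>x\<in>V. q2 x \<le> q1 x)"
    using C unfolding Chains_def relation_of_def by blast
  have sub: "\<forall>q\<in>C. sublinear_on V q" and le: "\<forall>q\<in>C. \<forall>x\<in>V. q x \<le> p x"
    using CA by (auto simp: sublinear_below_def)
  note Inf = sublinear_on_INF_chain[OF V ne sub le cmp]
  define u where "u = (\<lambda>x. if x \<in> V then (INF q\<in>C. q x) else 0)"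
  obtain q0 where q0: "q0 \<in> C" using ne by blast
  have "sublinear_on V u"
    by (rule sublinear_on_cong[OF V Inf(1)]) (simp add: u_def)
  moreover have "u x \<le> p x" if "x \<in> V" for x
    using Inf(2)[OF that q0] bspec[OF bspec[OF le q0] that] that by (simp add: u_def)
  ultimately have "u \<in> sublinear_below V p" by (simp add: sublinear_below_def u_def)
  moreover have "\<forall>q\<in>C. \<forall>x\<in>V. u x \<le> q x" using Inf(2) by (simp add: u_def)
  ultimately show ?thesis by blast
qed

text \<open>A minimal element is additive: otherwise its shift would be strictly smaller.\<close>
lemma minimal_sublinear_below_additive:
  assumes V: "fun_subspace V" and m: "m \<in> sublinear_below V p"
    and min: "\<And>q. q \<in> sublinear_below V p \<Longrightarrow> \<forall>x\<in>V. q x \<le> m x \<Longrightarrow> q = m"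
    and x: "x \<in> V" and a: "a \<in> V"
  shows "m (\<lambda>w. x w + a w) = m x + m a"
proof -
  have msub: "sublinear_on V m" using m by (simp add: sublinear_below_def)
  have "sublinear_shift V m a \<in> sublinear_below V p"
    using sublinear_on_shift[OF V msub a] sublinear_shift_le[OF V msub a] m
    by (force simp: sublinear_below_def sublinear_shift_def)
  then have "sublinear_shift V m a = m"
    using sublinear_shift_le[OF V msub a] by (intro min) auto
  then show ?thesis
    using sublinear_shift_le_diff[OF V msub a x] sublinear_onD(1)[OF msub x a] by simp
qed

lemma exists_additive_below_sublinear:
  assumes V: "fun_subspace V" and p: "sublinear_on V p"
  obtains m where "sublinear_on V m" "\<And>x. x \<in> V \<Longrightarrow> m x \<le> p x"
    "\<And>x a. x \<in> V \<Longrightarrow> a \<in> V \<Longrightarrow> m (\<lambda>w. x w + a w) = m x + m a"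
proof -
  let ?A = "sublinear_below V p" and ?P = "\<lambda>q1 q2. \<forall>x\<in>V. q2 x \<le> (q1 x :: real)"
  have "partial_order_on ?A (relation_of ?P ?A)"
  proof (rule partial_order_on_relation_ofI)
    show "a = b" if "a \<in> ?A" "b \<in> ?A" "?P a b" "?P b a" for a b
    proof
      fix x show "a x = b x"
        using that by (cases "x \<in> V") (auto simp: sublinear_below_def intro: antisym)
    qed
  qed (auto, meson order_trans)
  from predicate_Zorn[OF this sublinear_below_chain_bound[OF V p]]
  obtain m where m: "m \<in> ?A" and min: "\<And>q. q \<in> ?A \<Longrightarrow> ?P m q \<Longrightarrow> q = m"
    by blast
  then show ?thesis
    using that minimal_sublinear_below_additive[OF V m min] by (auto simp: sublinear_below_def)
qed

theorem exists_linear_below_sublinear: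
  assumes V: "fun_subspace V" and p: "sublinear_on V p" and y: "y \<in> V"
  obtains \<phi> where "\<And>x z. x \<in> V \<Longrightarrow> z \<in> V \<Longrightarrow> \<phi> (\<lambda>w. x w + z w) = \<phi> x + \<phi> z"
    "\<And>c x. x \<in> V \<Longrightarrow> \<phi> (\<lambda>w. c * x w) = c * \<phi> x"
    "\<And>x. x \<in> V \<Longrightarrow> \<phi> x \<le> p x" "\<phi> y = p y"
proof -
  obtain m where msub: "sublinear_on V m" and mle: "\<And>x. x \<in> V \<Longrightarrow> m x \<le> sublinear_shift V p y x"
    and add: "\<And>x a. x \<in> V \<Longrightarrow> a \<in> V \<Longrightarrow> m (\<lambda>w. x w + a w) = m x + m a"
    using exists_additive_below_sublinear[OF V sublinear_on_shift[OF V p y]] by blast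
  have neg: "m (\<lambda>w. -1 * x w) = - m x" if x: "x \<in> V" for x
  proof -
    have "m (\<lambda>w. x w + -1 * x w) = m x + m (\<lambda>w. -1 * x w)"
      by (rule add[OF x fun_subspaceD(3)[OF V x]])
    then show ?thesis using sublinear_on_zero[OF V msub] by simp
  qed
  have scale: "m (\<lambda>w. c * x w) = c * m x" if x: "x \<in> V" for c x
  proof (cases "c \<ge> 0")
    case True then show ?thesis using sublinear_onD(2)[OF msub True x] by simp
  next
    case False
    have "m (\<lambda>w. (-c) * (-1 * x w)) = (-c) * m (\<lambda>w. -1 * x w)"
      using False by (intro sublinear_onD(2)[OF msub _ fun_subspaceD(3)[OF V x]]) simp
    then show ?thesis using neg[OF x] by simp
  qed
  have le: "m x \<le> p x" if "x \<in> V" for x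
    using mle[OF that] sublinear_shift_le[OF V p y that] by simp
  have "m (\<lambda>w. -1 * y w) \<le> p (\<lambda>w. -1 * y w + y w) - p y"
    using mle[OF fun_subspaceD(3)[OF V y, of "-1"]]
      sublinear_shift_le_diff[OF V p y fun_subspaceD(3)[OF V y, of "-1"]] by simp
  then have "m y = p y"
    using neg[OF y] sublinear_on_zero[OF V p] le[OF y] by simp
  with add scale le show ?thesis using that by blast
qed

section \<open>Order continuity and \<open>\<sigma>\<close>-finite supports\<close>

lemma direct_sum_null:
  assumes P: "P \<subseteq> sets M"
    and meas: "\<forall>A\<in>sets M. emeasure M A = (SUP F\<in>{F. finite F \<and> F \<subseteq> P}. \<Sum>B\<in>F. emeasure M (A \<inter> B))"
    and N: "N \<in> sets M" and null: "\<And>B. B \<in> P \<Longrightarrow> emeasure M (N \<inter> B) = 0"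
  shows "emeasure M N = 0"
proof -
  have "emeasure M N = (SUP F\<in>{F. finite F \<and> F \<subseteq> P}. 0)"
    using meas N null by (auto intro!: SUP_cong sum.neutral)
  also have "\<dots> = 0" by (rule SUP_const) auto
  finally show ?thesis .
qed

lemma sigma_finite_density_indicator_Union:
  assumes F: "countable \<F>" "\<F> \<subseteq> sets M" and fin: "\<And>B. B \<in> \<F> \<Longrightarrow> emeasure M B < \<infinity>"
  shows "sigma_finite_measure (density M (indicator (\<Union>\<F>)))"
proof
  let ?Q = "\<Union>\<F>" and ?A = "insert (space M - \<Union>\<F>) \<F>"
  have Q: "?Q \<in> sets M" using F by (intro sets.countable_Union) auto
  have "emeasure (density M (indicator ?Q)) a \<noteq> \<infinity>" if a: "a \<in> ?A" for a
  proof -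
    have am: "a \<in> sets M" using a F Q by auto
    have "emeasure (density M (indicator ?Q)) a = (\<integral>\<^sup>+ w. indicator ?Q w * indicator a w \<partial>M)"
      using Q am by (intro emeasure_density) auto
    also have "\<dots> \<le> (if a \<in> \<F> then emeasure M a else 0)"
    proof (cases "a \<in> \<F>")
      case True
      have "(\<integral>\<^sup>+ w. indicator ?Q w * indicator a w \<partial>M) \<le> (\<integral>\<^sup>+ w. indicator a w \<partial>M)"
        by (intro nn_integral_mono) (auto simp: indicator_def)
      then show ?thesis using True am by simp
    next
      case False
      then have "a = space M - ?Q" using a by auto
      then have "(\<integral>\<^sup>+ w. indicator ?Q w * indicator a w \<partial>M) = (\<integral>\<^sup>+ w. 0 \<partial>M)"
        by (intro nn_integral_cong) (auto simp: indicator_def)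
      then show ?thesis using False by simp
    qed
    also have "\<dots> < \<infinity>" using fin by auto
    finally show ?thesis by simp
  qed
  moreover have "countable ?A" "?A \<subseteq> sets (density M (indicator ?Q))"
    "\<Union>?A = space (density M (indicator ?Q))"
    using F Q sets.sets_into_space by auto
  ultimately show "\<exists>A. countable A \<and> A \<subseteq> sets (density M (indicator ?Q)) \<and>
      \<Union>A = space (density M (indicator ?Q)) \<and> (\<forall>a\<in>A. emeasure (density M (indicator ?Q)) a \<noteq> \<infinity>)"
    by blast
qed

lemma ord_cont_at_indicator_small:
  assumes oc: "ord_cont_at M E y" and ym: "y \<in> borel_measurable M"
    and ne: "\<B> \<noteq> {}" and sets: "\<B> \<subseteq> sets M"
    and directed: "\<And>B1 B2. B1 \<in> \<B> \<Longrightarrow> B2 \<in> \<B> \<Longrightarrow> \<exists>B\<in>\<B>. B \<subseteq> B1 \<inter> B2"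
    and vanish: "\<And>N. N \<in> sets M \<Longrightarrow> (\<And>B. B \<in> \<B> \<Longrightarrow> AE w in M. w \<in> N \<longrightarrow> w \<in> B) \<Longrightarrow>
      emeasure M N = 0"
    and e: "0 < e"
  shows "\<exists>B\<in>\<B>. nrm E (\<lambda>w. \<bar>y w\<bar> * indicator B w) < e"
proof -
  let ?d = "\<lambda>B w. \<bar>y w\<bar> * indicator B w"
  have "\<exists>d\<in>?d ` \<B>. nrm E d < e"
  proof (rule ord_cont_atD[OF oc _ _ _ _ _ e])
    show "?d ` \<B> \<noteq> {}" using ne by simp
    show "?d ` \<B> \<subseteq> borel_measurable M" using sets ym by (auto intro!: borel_measurable_times)
    show "AE w in M. 0 \<le> d w \<and> d w \<le> \<bar>y w\<bar>" if "d \<in> ?d ` \<B>" for d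
      using that by (auto simp: indicator_def)
    show "\<exists>d\<in>?d ` \<B>. AE w in M. d w \<le> u w \<and> d w \<le> v w"
      if u: "u \<in> ?d ` \<B>" and v: "v \<in> ?d ` \<B>" for u v
    proof -
      obtain B1 B2 where B: "B1 \<in> \<B>" "B2 \<in> \<B>" "u = ?d B1" "v = ?d B2" using u v by blast
      then obtain B where "B \<in> \<B>" "B \<subseteq> B1 \<inter> B2" using directed by blast
      then show ?thesis unfolding B by (intro bexI[of _ "?d B"] AE_I2) (auto simp: indicator_def)
    qed
    show "AE w in M. z w \<le> 0"
      if z: "z \<in> borel_measurable M" and below: "\<And>d. d \<in> ?d ` \<B> \<Longrightarrow> AE w in M. z w \<le> d w" for z
    proof -
      let ?N = "{w \<in> space M. 0 < z w}"
      have Nm: "?N \<in> sets M" using z by measurable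
      have "AE w in M. w \<in> ?N \<longrightarrow> w \<in> B" if "B \<in> \<B>" for B
      proof -
        have "AE w in M. z w \<le> ?d B w" using below[OF imageI[OF that]] by simp
        then show ?thesis
        proof eventually_elim
          case (elim w)
          then show ?case by (cases "w \<in> B") auto
        qed
      qed
      then have "emeasure M ?N = 0" by (rule vanish[OF Nm])
      moreover have "{w \<in> space M. \<not> z w \<le> 0} = ?N" by auto
      ultimately show ?thesis using AE_iff_measurable[OF Nm, of "\<lambda>w. z w \<le> 0"] by simp
    qed
  qed
  then show ?thesis by blast
qed

lemma direct_sum_propertyE:
  assumes "direct_sum_property M"
  obtains P where "P \<subseteq> sets M" "\<And>B. B \<in> P \<Longrightarrow> emeasure M B < \<infinity>"
    "\<forall>A\<in>sets M. emeasure M A = (SUP F\<in>{F. finite F \<and> F \<subseteq> P}. \<Sum>B\<in>F. emeasure M (A \<inter> B))"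
proof -
  obtain P where sets: "P \<subseteq> sets M" and fin: "\<forall>B\<in>P. emeasure M B < \<infinity>"
    and "\<forall>B\<in>P. \<forall>C\<in>P. B \<noteq> C \<longrightarrow> B \<inter> C = {}" "\<Union>P = space M"
      "\<forall>A. A \<subseteq> space M \<longrightarrow> (A \<in> sets M \<longleftrightarrow> (\<forall>B\<in>P. A \<inter> B \<in> sets M))"
    and meas: "\<forall>A\<in>sets M. emeasure M A = (SUP F\<in>{F. finite F \<and> F \<subseteq> P}. \<Sum>B\<in>F. emeasure M (A \<inter> B))"
    using assms unfolding direct_sum_property_def by (elim exE conjE) (rule that)
  show ?thesis
  proof (rule that[OF sets _ meas])
    show "emeasure M B < \<infinity>" if "B \<in> P" for B using fin that ..
  qed
qed

lemma direct_sum_small_tail: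
  assumes P: "P \<subseteq> sets M"
    and meas: "\<forall>A\<in>sets M. emeasure M A = (SUP F\<in>{F. finite F \<and> F \<subseteq> P}. \<Sum>B\<in>F. emeasure M (A \<inter> B))"
    and oc: "ord_cont_at M E y" and ym: "y \<in> borel_measurable M" and e: "0 < e"
  shows "\<exists>F. finite F \<and> F \<subseteq> P \<and> nrm E (\<lambda>w. \<bar>y w\<bar> * indicator (space M - \<Union>F) w) < e"
proof -
  let ?\<B> = "(\<lambda>F. space M - \<Union>F) ` {F. finite F \<and> F \<subseteq> P}"
  have "\<exists>B\<in>?\<B>. nrm E (\<lambda>w. \<bar>y w\<bar> * indicator B w) < e"
  proof (rule ord_cont_at_indicator_small[OF oc ym _ _ _ _ e])
    show "?\<B> \<noteq> {}" by blast
    show "?\<B> \<subseteq> sets M"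
    proof
      fix B assume "B \<in> ?\<B>"
      then obtain F where F: "B = space M - \<Union>F" "finite F" "F \<subseteq> P" by blast
      then have "\<Union>F \<in> sets M" using P by (intro sets.finite_Union) auto
      then show "B \<in> sets M" unfolding F(1) by (rule sets.compl_sets)
    qed
    show "\<exists>B\<in>?\<B>. B \<subseteq> B1 \<inter> B2" if B1: "B1 \<in> ?\<B>" and B2: "B2 \<in> ?\<B>" for B1 B2
    proof -
      obtain F1 F2 where F: "B1 = space M - \<Union>F1" "B2 = space M - \<Union>F2"
        "finite F1" "F1 \<subseteq> P" "finite F2" "F2 \<subseteq> P"
        using B1 B2 by blast
      show ?thesis
      proof (rule bexI)
        show "space M - \<Union>(F1 \<union> F2) \<subseteq> B1 \<inter> B2" using F(1,2) by auto
        show "space M - \<Union>(F1 \<union> F2) \<in> ?\<B>" using F(3-6) by (intro imageI) simp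
      qed
    qed
    show "emeasure M N = 0"
      if N: "N \<in> sets M" and inside: "\<And>B. B \<in> ?\<B> \<Longrightarrow> AE w in M. w \<in> N \<longrightarrow> w \<in> B" for N
    proof (rule direct_sum_null[OF P meas N])
      fix B assume B: "B \<in> P"
      have "space M - \<Union>{B} \<in> ?\<B>" using B by (intro imageI) simp
      then have "AE w in M. w \<in> N \<longrightarrow> w \<in> space M - \<Union>{B}" by (rule inside)
      then have "AE w in M. w \<notin> N \<inter> B" by eventually_elim auto
      moreover have NB: "N \<inter> B \<in> sets M" using N B P by auto
      ultimately have "N \<inter> B \<in> null_sets M" using AE_iff_null_sets[OF NB] by simp
      then show "emeasure M (N \<inter> B) = 0" by auto
    qed
  qed
  then show ?thesis by auto
qed

text \<open>By order continuity, countably many pieces of the direct sum decomposition carry \<open>y\<close>.\<close>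
lemma ord_cont_at_sigma_finite_support:
  assumes E: "BIS M E" and dsp: "direct_sum_property M"
    and y: "y \<in> elts E" and oc: "ord_cont_at M E y"
  obtains Q where "Q \<in> sets M" "sigma_finite_measure (density M (indicator Q))"
    "AE w in M. w \<notin> Q \<longrightarrow> y w = 0"
proof -
  obtain P where P: "P \<subseteq> sets M" "\<And>B. B \<in> P \<Longrightarrow> emeasure M B < \<infinity>"
    and meas: "\<forall>A\<in>sets M. emeasure M A = (SUP F\<in>{F. finite F \<and> F \<subseteq> P}. \<Sum>B\<in>F. emeasure M (A \<inter> B))"
    using direct_sum_propertyE[OF dsp] by blast
  have EI: "normed_ideal M E" using BIS_normed_ideal[OF E] .
  have ym: "y \<in> borel_measurable M" using normed_ideal_measurable[OF EI y] .
  have ay: "(\<lambda>w. \<bar>y w\<bar>) \<in> elts E" using solidD[OF normed_idealD(7)[OF EI] y] ym by auto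
  let ?d = "\<lambda>B w. \<bar>y w\<bar> * indicator B w"
  have "\<forall>n. \<exists>F. finite F \<and> F \<subseteq> P \<and> nrm E (?d (space M - \<Union>F)) < 1 / Suc n"
    using direct_sum_small_tail[OF P(1) meas oc ym] by simp
  then obtain F where F: "\<And>n. finite (F n)" "\<And>n. F n \<subseteq> P"
    "\<And>n. nrm E (?d (space M - \<Union>(F n))) < 1 / Suc n"
    by (auto dest!: choice)
  define Q where "Q = \<Union>(\<Union>n. F n)"
  have countable: "countable (\<Union>n. F n)" using F(1) by (auto intro: countable_finite)
  have Q: "Q \<in> sets M" unfolding Q_def using countable F(2) P(1) by (intro sets.countable_Union) auto
  have F_sets: "\<Union>(F n) \<in> sets M" for n using F(1,2) P(1) by (intro sets.finite_Union) auto
  have "nrm E (?d (space M - Q)) \<le> 0"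
  proof (rule le_0_if_le_inverse_Suc)
    fix n
    have "nrm E (?d (space M - Q)) \<le> nrm E (?d (space M - \<Union>(F n)))"
      using Q F_sets by (intro normed_ideal_indicator_mono[OF EI ay]) (auto simp: Q_def)
    then show "nrm E (?d (space M - Q)) \<le> 1 / Suc n" using F(3)[of n] by simp
  qed
  moreover have QE: "?d (space M - Q) \<in> elts E" using Q by (intro normed_ideal_indicator[OF EI ay]) auto
  ultimately have "nrm E (?d (space M - Q)) = 0"
    using normed_idealD(5)[OF EI QE] by simp
  then have "AE w in M. ?d (space M - Q) w = 0"
    using BIS_nrm_eq_0_iff[OF E QE] by simp
  then have "AE w in M. w \<notin> Q \<longrightarrow> y w = 0"
    using AE_space by eventually_elim (auto simp: indicator_def)
  moreover have "sigma_finite_measure (density M (indicator Q))"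
    unfolding Q_def using countable F(2) P by (intro sigma_finite_density_indicator_Union) auto
  ultimately show ?thesis using that Q by blast
qed

section \<open>Norming functionals in the dual of \<open>E\<^sub>0\<close>\<close>

locale norming_setup =
  fixes M :: "'a measure" and E :: "'a ispace" and y :: "'a \<Rightarrow> real"
  assumes BIS: "BIS M E" and foundation: "foundation M (ocpart M E) E"
    and direct_sum: "direct_sum_property M"
    and y: "y \<in> elts (ocpart M E)" and y_nonneg: "\<And>w. 0 \<le> y w"
begin

abbreviation V :: "('a \<Rightarrow> real) set" where "V \<equiv> elts (ocpart M E)"

lemma normed_ideal_E: "normed_ideal M E"
  using BIS_normed_ideal[OF BIS] .

lemma normed_ideal_V: "normed_ideal M (ocpart M E)"
  using ocpart_normed_ideal[OF normed_ideal_E foundation] .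

lemma V_subset: "V \<subseteq> elts E"
  by (auto simp: ocpart_def)

lemma fun_subspace_V: "fun_subspace V"
  using normed_idealD(2-4)[OF normed_ideal_V] unfolding fun_subspace_def by blast

lemma V_measurable: "x \<in> V \<Longrightarrow> x \<in> borel_measurable M"
  using normed_ideal_measurable[OF normed_ideal_V] .

lemma V_solid: "x \<in> V \<Longrightarrow> z \<in> borel_measurable M \<Longrightarrow> (\<And>w. \<bar>z w\<bar> \<le> \<bar>x w\<bar>) \<Longrightarrow> z \<in> V"
  using solidD[OF normed_idealD(7)[OF normed_ideal_V]] by blast

lemma E_solid:
  "x \<in> elts E \<Longrightarrow> z \<in> borel_measurable M \<Longrightarrow> (AE w in M. \<bar>z w\<bar> \<le> \<bar>x w\<bar>) \<Longrightarrow>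
    z \<in> elts E \<and> nrm E z \<le> nrm E x"
  using solidD[OF normed_idealD(7)[OF normed_ideal_E]] by blast

lemma y_measurable: "y \<in> borel_measurable M"
  using V_measurable[OF y] .

lemma y_indicator_V: "A \<in> sets M \<Longrightarrow> (\<lambda>w. y w * indicator A w) \<in> V"
  using normed_ideal_indicator[OF normed_ideal_V y] .

text \<open>A linear functional below \<open>pos_nrm\<close> is positive and bounded by the norm.\<close>
definition pos_nrm :: "('a \<Rightarrow> real) \<Rightarrow> real" where
  "pos_nrm x = nrm E (\<lambda>w. max (x w) 0)"

lemma pos_part_E:
  assumes x: "x \<in> elts E"
  shows "(\<lambda>w. max (x w) 0) \<in> elts E" "nrm E (\<lambda>w. max (x w) 0) \<le> nrm E x"
proof -
  have "(\<lambda>w. max (x w) 0) \<in> borel_measurable M"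
    using normed_ideal_measurable[OF normed_ideal_E x] by measurable
  then show "(\<lambda>w. max (x w) 0) \<in> elts E" "nrm E (\<lambda>w. max (x w) 0) \<le> nrm E x"
    using E_solid[OF x] by auto
qed

lemma sublinear_on_pos_nrm: "sublinear_on V pos_nrm"
  unfolding sublinear_on_def
proof (intro conjI ballI allI impI)
  fix x z assume x: "x \<in> V" and z: "z \<in> V"
  have xE: "x \<in> elts E" and zE: "z \<in> elts E" using x z V_subset by auto
  have sum: "(\<lambda>w. max (x w) 0 + max (z w) 0) \<in> elts E"
    using normed_idealD(3)[OF normed_ideal_E pos_part_E(1)[OF xE] pos_part_E(1)[OF zE]] .
  have "(\<lambda>w. max (x w + z w) 0) \<in> borel_measurable M"
    using V_measurable[OF x] V_measurable[OF z] by measurable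
  then have "pos_nrm (\<lambda>w. x w + z w) \<le> nrm E (\<lambda>w. max (x w) 0 + max (z w) 0)"
    unfolding pos_nrm_def using E_solid[OF sum] by (auto intro!: AE_I2)
  also have "\<dots> \<le> pos_nrm x + pos_nrm z"
    unfolding pos_nrm_def by (rule BIS_triangle[OF BIS pos_part_E(1)[OF xE] pos_part_E(1)[OF zE]])
  finally show "pos_nrm (\<lambda>w. x w + z w) \<le> pos_nrm x + pos_nrm z" .
next
  fix c :: real and x assume c: "0 \<le> c" and x: "x \<in> V"
  have "(\<lambda>w. max (c * x w) 0) = (\<lambda>w. c * max (x w) 0)"
    using c by (auto simp: max_mult_distrib_left)
  then show "pos_nrm (\<lambda>w. c * x w) = c * pos_nrm x"
    unfolding pos_nrm_def
    using normed_idealD(6)[OF normed_ideal_E pos_part_E(1), of x c] c x V_subset by auto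
qed

lemma exists_functional:
  obtains \<phi> where "\<And>x z. x \<in> V \<Longrightarrow> z \<in> V \<Longrightarrow> \<phi> (\<lambda>w. x w + z w) = \<phi> x + \<phi> z"
    "\<And>c x. x \<in> V \<Longrightarrow> \<phi> (\<lambda>w. c * x w) = c * \<phi> x"
    "\<And>x. x \<in> V \<Longrightarrow> \<phi> x \<le> pos_nrm x" "\<phi> y = pos_nrm y"
  using exists_linear_below_sublinear[OF fun_subspace_V sublinear_on_pos_nrm y] by blast

end

locale norming_functional = norming_setup +
  fixes \<phi> :: "('a \<Rightarrow> real) \<Rightarrow> real"
  assumes phi_add: "\<And>x z. x \<in> V \<Longrightarrow> z \<in> V \<Longrightarrow> \<phi> (\<lambda>w. x w + z w) = \<phi> x + \<phi> z"
    and phi_scale: "\<And>c x. x \<in> V \<Longrightarrow> \<phi> (\<lambda>w. c * x w) = c * \<phi> x"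
    and phi_le_pos_nrm: "\<And>x. x \<in> V \<Longrightarrow> \<phi> x \<le> pos_nrm x"
    and phi_y: "\<phi> y = pos_nrm y"
begin

lemma phi_zero: "\<phi> (\<lambda>_. 0) = 0"
  using phi_scale[OF normed_idealD(2)[OF normed_ideal_V], of 0] by simp

lemma phi_diff: "x \<in> V \<Longrightarrow> z \<in> V \<Longrightarrow> \<phi> (\<lambda>w. x w - z w) = \<phi> x - \<phi> z"
  using phi_add[of x "\<lambda>w. -1 * z w"] phi_scale[of z "-1"] fun_subspaceD(3)[OF fun_subspace_V, of z "-1"]
  by simp

lemma phi_le_nrm: "x \<in> V \<Longrightarrow> \<phi> x \<le> nrm E x"
  using phi_le_pos_nrm[of x] pos_part_E(2)[OF subsetD[OF V_subset]] unfolding pos_nrm_def by fastforce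

lemma phi_mono:
  assumes x: "x \<in> V" and z: "z \<in> V" and le: "AE w in M. x w \<le> z w"
  shows "\<phi> x \<le> \<phi> z"
proof -
  have d: "(\<lambda>w. x w - z w) \<in> V" using normed_ideal_diff[OF normed_ideal_V x z] .
  have "AE w in M. max (x w - z w) 0 = 0" using le by eventually_elim auto
  then have "pos_nrm (\<lambda>w. x w - z w) = 0"
    unfolding pos_nrm_def using BIS_nrm_eq_0_iff[OF BIS pos_part_E(1)] d V_subset by auto
  then show ?thesis using phi_le_pos_nrm[OF d] phi_diff[OF x z] by simp
qed

lemma phi_nonneg: "x \<in> V \<Longrightarrow> (AE w in M. 0 \<le> x w) \<Longrightarrow> 0 \<le> \<phi> x"
  using phi_mono[OF normed_idealD(2)[OF normed_ideal_V], of x] phi_zero by simp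

lemma phi_cong:
  assumes "x \<in> V" "z \<in> V" "AE w in M. x w = z w"
  shows "\<phi> x = \<phi> z"
proof -
  have "AE w in M. x w \<le> z w" "AE w in M. z w \<le> x w" using assms(3) by (auto elim: eventually_mono)
  then show ?thesis using phi_mono assms(1,2) by (blast intro: antisym)
qed

lemma phi_y_nrm: "\<phi> y = nrm E y"
  using phi_y y_nonneg by (simp add: pos_nrm_def max_absorb1)

lemma phi_indicator_nonneg: "A \<in> sets M \<Longrightarrow> 0 \<le> \<phi> (\<lambda>w. y w * indicator A w)"
  by (rule phi_nonneg[OF y_indicator_V]) (auto intro!: AE_I2 simp: y_nonneg)

lemma nrm_y_indicator_tail:
  assumes A: "range A \<subseteq> sets M" "incseq A" and e: "0 < e"
  shows "\<exists>n. \<forall>m\<ge>n. nrm E (\<lambda>w. y w * indicator ((\<Union>i. A i) - A m) w) < e"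
proof -
  let ?U = "\<Union>i. A i"
  have U: "?U \<in> sets M" using A(1) by auto
  have y_abs: "(\<lambda>w. \<bar>y w\<bar> * indicator B w) = (\<lambda>w. y w * indicator B w)" for B
    using y_nonneg by (simp add: abs_of_nonneg)
  have "\<exists>B\<in>range (\<lambda>n. ?U - A n). nrm E (\<lambda>w. \<bar>y w\<bar> * indicator B w) < e"
  proof (rule ord_cont_at_indicator_small[OF _ y_measurable _ _ _ _ e])
    show "ord_cont_at M E y" using y by (simp add: ocpart_def)
    show "range (\<lambda>n. ?U - A n) \<noteq> {}" by simp
    show "range (\<lambda>n. ?U - A n) \<subseteq> sets M" using U A(1) by auto
    show "\<exists>B\<in>range (\<lambda>n. ?U - A n). B \<subseteq> B1 \<inter> B2"
      if B1: "B1 \<in> range (\<lambda>n. ?U - A n)" and B2: "B2 \<in> range (\<lambda>n. ?U - A n)" for B1 B2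
    proof -
      obtain n m where "B1 = ?U - A n" "B2 = ?U - A m" using B1 B2 by blast
      moreover have "A n \<subseteq> A (max n m)" "A m \<subseteq> A (max n m)" using A(2) by (auto simp: incseq_def)
      ultimately show ?thesis by (intro bexI[of _ "?U - A (max n m)"]) auto
    qed
    show "emeasure M N = 0" if N: "N \<in> sets M"
      and inside: "\<And>B. B \<in> range (\<lambda>n. ?U - A n) \<Longrightarrow> AE w in M. w \<in> N \<longrightarrow> w \<in> B" for N
    proof -
      have "AE w in M. w \<in> N \<longrightarrow> w \<in> ?U - A n" for n by (intro inside) auto
      then have "AE w in M. \<forall>n. w \<in> N \<longrightarrow> w \<in> ?U - A n" by (intro AE_all_countable[THEN iffD2] allI)
      then have "AE w in M. w \<notin> N" by eventually_elim blast
      then show ?thesis using AE_iff_null_sets[OF N] by auto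
    qed
  qed
  then obtain n where n: "nrm E (\<lambda>w. y w * indicator (?U - A n) w) < e" by (auto simp: y_abs)
  have "nrm E (\<lambda>w. y w * indicator (?U - A m) w) < e" if "n \<le> m" for m
  proof -
    have "A n \<subseteq> A m" using A(2) that by (simp add: incseq_def)
    then have "nrm E (\<lambda>w. y w * indicator (?U - A m) w) \<le> nrm E (\<lambda>w. y w * indicator (?U - A n) w)"
      using U A(1) y V_subset by (intro normed_ideal_indicator_mono[OF normed_ideal_E]) auto
    then show ?thesis using n by simp
  qed
  then show ?thesis by blast
qed

lemma phi_indicator_LIMSEQ:
  assumes A: "range A \<subseteq> sets M" "incseq A"
  shows "(\<lambda>n. \<phi> (\<lambda>w. y w * indicator (A n) w)) \<longlonglongrightarrow> \<phi> (\<lambda>w. y w * indicator (\<Union>i. A i) w)"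
proof (rule LIMSEQ_I)
  let ?U = "\<Union>i. A i"
  fix e :: real assume "0 < e"
  then obtain n where n: "\<And>m. n \<le> m \<Longrightarrow> nrm E (\<lambda>w. y w * indicator (?U - A m) w) < e"
    using nrm_y_indicator_tail[OF A] by blast
  have "norm (\<phi> (\<lambda>w. y w * indicator (A m) w) - \<phi> (\<lambda>w. y w * indicator ?U w)) < e" if "n \<le> m" for m
  proof -
    have Am: "?U - A m \<in> sets M" using A(1) by auto
    have "(\<lambda>w. y w * indicator ?U w - y w * indicator (A m) w) = (\<lambda>w. y w * indicator (?U - A m) w)"
      by (auto simp: indicator_def fun_eq_iff)
    moreover have "\<phi> (\<lambda>w. y w * indicator ?U w - y w * indicator (A m) w)
        = \<phi> (\<lambda>w. y w * indicator ?U w) - \<phi> (\<lambda>w. y w * indicator (A m) w)"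
      using A(1) by (intro phi_diff y_indicator_V) auto
    ultimately have "norm (\<phi> (\<lambda>w. y w * indicator (A m) w) - \<phi> (\<lambda>w. y w * indicator ?U w))
        = \<phi> (\<lambda>w. y w * indicator (?U - A m) w)"
      using phi_indicator_nonneg[OF Am] by (simp add: abs_minus_commute)
    also have "\<dots> \<le> nrm E (\<lambda>w. y w * indicator (?U - A m) w)"
      by (rule phi_le_nrm[OF y_indicator_V[OF Am]])
    also have "\<dots> < e" by (rule n[OF that])
    finally show ?thesis .
  qed
  then show "\<exists>no. \<forall>m\<ge>no. norm (\<phi> (\<lambda>w. y w * indicator (A m) w) - \<phi> (\<lambda>w. y w * indicator ?U w)) < e"
    by blast
qed

text \<open>The set function \<open>A \<mapsto> \<phi>(y \<one>\<^sub>A)\<close> is a measure: it is additive because \<open>\<phi>\<close> is linear,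
  and continuous from below because \<open>y\<close> has order continuous norm.\<close>
lemma countably_additive_phi_indicator:
  "countably_additive (sets M) (\<lambda>A. ennreal (\<phi> (\<lambda>w. y w * indicator A w)))"
proof -
  let ?m = "\<lambda>A. ennreal (\<phi> (\<lambda>w. y w * indicator A w))"
  have pos: "positive (sets M) ?m" unfolding positive_def using phi_zero by simp
  have "?m (A \<union> B) = ?m A + ?m B" if A: "A \<in> sets M" and B: "B \<in> sets M" and AB: "A \<inter> B = {}" for A B
  proof -
    have "(\<lambda>w. y w * indicator (A \<union> B) w) = (\<lambda>w. y w * indicator A w + y w * indicator B w)"
      using AB by (auto simp: indicator_def fun_eq_iff)
    then show ?thesis
      using phi_add[OF y_indicator_V[OF A] y_indicator_V[OF B]]
        phi_indicator_nonneg[OF A] phi_indicator_nonneg[OF B] by (simp add: ennreal_plus)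
  qed
  then have add: "additive (sets M) ?m" unfolding additive_def by blast
  show ?thesis
    unfolding sets.countably_additive_iff_continuous_from_below[OF pos add]
  proof (intro allI impI)
    fix A :: "nat \<Rightarrow> 'a set" assume "range A \<subseteq> sets M" "incseq A" "(\<Union>i. A i) \<in> sets M"
    then show "(\<lambda>i. ?m (A i)) \<longlonglongrightarrow> ?m (\<Union>i. A i)"
      using phi_indicator_LIMSEQ by (intro tendsto_ennrealI) blast
  qed
qed

definition phi_measure :: "'a measure" where
  "phi_measure = measure_of (space M) (sets M) (\<lambda>A. ennreal (\<phi> (\<lambda>w. y w * indicator A w)))"

lemma sets_phi_measure [simp, measurable_cong]: "sets phi_measure = sets M"
  by (simp add: phi_measure_def)

lemma emeasure_phi_measure:
  "A \<in> sets M \<Longrightarrow> emeasure phi_measure A = ennreal (\<phi> (\<lambda>w. y w * indicator A w))"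
  unfolding phi_measure_def using phi_zero
  by (intro emeasure_measure_of_sigma sets.sigma_algebra_axioms countably_additive_phi_indicator)
    (auto simp: positive_def)

text \<open>Radon--Nikodym applies on the \<open>\<sigma>\<close>-finite support \<open>Q\<close> of \<open>y\<close>, outside of which
  \<open>phi_measure\<close> vanishes.\<close>
lemma phi_measure_has_density:
  obtains h0 where "h0 \<in> borel_measurable M" "density M h0 = phi_measure"
proof -
  obtain Q where Q: "Q \<in> sets M" and sf: "sigma_finite_measure (density M (indicator Q))"
    and off: "AE w in M. w \<notin> Q \<longrightarrow> y w = 0"
    using ord_cont_at_sigma_finite_support[OF BIS direct_sum] y V_subset by (auto simp: ocpart_def)
  have "absolutely_continuous (density M (indicator Q)) phi_measure"
    unfolding absolutely_continuous_def
  proof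
    fix A assume "A \<in> null_sets (density M (indicator Q))"
    then have A: "A \<in> sets M" and null: "AE w in M. w \<in> A \<longrightarrow> indicator Q w = (0::ennreal)"
      using null_sets_density_iff[of "indicator Q" M] Q by auto
    have "AE w in M. y w * indicator A w = 0"
      using null off by eventually_elim (auto simp: indicator_def split: if_splits)
    then have "\<phi> (\<lambda>w. y w * indicator A w) = \<phi> (\<lambda>_. 0)"
      by (intro phi_cong[OF y_indicator_V[OF A] normed_idealD(2)[OF normed_ideal_V]])
    then show "A \<in> null_sets phi_measure"
      using emeasure_phi_measure[OF A] phi_zero A by (simp add: null_sets_def)
  qed
  from sigma_finite_measure.Radon_Nikodym[OF sf this]
  obtain g where g: "g \<in> borel_measurable M" and "density (density M (indicator Q)) g = phi_measure"
    by auto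
  then have "density M (\<lambda>w. indicator Q w * g w) = phi_measure"
    using density_density_eq[of "indicator Q" M g] Q by simp
  moreover have "(\<lambda>w. indicator Q w * g w) \<in> borel_measurable M" using g Q by measurable
  ultimately show ?thesis using that by blast
qed

lemma exists_density:
  obtains h where "h \<in> borel_measurable M" "\<And>w. 0 \<le> h w"
    "\<And>A. A \<in> sets M \<Longrightarrow> (\<integral>\<^sup>+w. ennreal (h w) * indicator A w \<partial>M) = ennreal (\<phi> (\<lambda>w. y w * indicator A w))"
proof -
  obtain h0 where h0: "h0 \<in> borel_measurable M" and dens: "density M h0 = phi_measure"
    using phi_measure_has_density by blast
  have int: "(\<integral>\<^sup>+w. h0 w * indicator A w \<partial>M) = ennreal (\<phi> (\<lambda>w. y w * indicator A w))"
    if "A \<in> sets M" for A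
    using emeasure_density[OF h0 that, symmetric] emeasure_phi_measure[OF that] dens by simp
  have "(\<integral>\<^sup>+w. h0 w \<partial>M) \<noteq> \<infinity>"
    using int[OF sets.top] by (simp add: nn_integral_set_ennreal[symmetric] indicator_inter_arith)
  then have fin: "AE w in M. h0 w \<noteq> \<infinity>" by (rule nn_integral_PInf_AE[OF h0])
  have "(\<integral>\<^sup>+w. ennreal (enn2real (h0 w)) * indicator A w \<partial>M) = (\<integral>\<^sup>+w. h0 w * indicator A w \<partial>M)" for A
    using fin by (intro nn_integral_cong_AE) (auto simp: less_top elim!: eventually_mono)
  then show ?thesis
    using that[of "\<lambda>w. enn2real (h0 w)"] h0 int by auto
qed

end

locale norming_density = norming_functional +
  fixes h :: "'a \<Rightarrow> real"
  assumes h_measurable: "h \<in> borel_measurable M" and h_nonneg: "\<And>w. 0 \<le> h w"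
    and h_indicator: "\<And>A. A \<in> sets M \<Longrightarrow>
      (\<integral>\<^sup>+w. ennreal (h w) * indicator A w \<partial>M) = ennreal (\<phi> (\<lambda>w. y w * indicator A w))"
begin

lemma phi_split:
  assumes v: "v \<in> V" and S: "S \<in> sets M"
  shows "(\<lambda>w. v w * indicator S w) \<in> V" "(\<lambda>w. v w - v w * indicator S w) \<in> V"
    "\<phi> v = \<phi> (\<lambda>w. v w * indicator S w) + \<phi> (\<lambda>w. v w - v w * indicator S w)"
proof -
  show vS: "(\<lambda>w. v w * indicator S w) \<in> V"
    by (rule V_solid[OF v]) (use V_measurable[OF v] S in \<open>auto simp: indicator_def\<close>)
  show vR: "(\<lambda>w. v w - v w * indicator S w) \<in> V"
    using normed_ideal_diff[OF normed_ideal_V v vS] .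
  show "\<phi> v = \<phi> (\<lambda>w. v w * indicator S w) + \<phi> (\<lambda>w. v w - v w * indicator S w)"
    using phi_add[OF vS vR] by simp
qed

definition phi_dominates :: "('a \<Rightarrow> real) \<Rightarrow> bool" where
  "phi_dominates u \<longleftrightarrow> (\<forall>v\<in>V. (\<forall>w. 0 \<le> v w) \<longrightarrow> (AE w in M. y w * u w \<le> v w) \<longrightarrow>
     (\<integral>\<^sup>+w. ennreal (h w * u w) \<partial>M) \<le> ennreal (\<phi> v))"

lemma phi_dominatesI:
  "(\<And>v. v \<in> V \<Longrightarrow> (\<And>w. 0 \<le> v w) \<Longrightarrow> (AE w in M. y w * u w \<le> v w) \<Longrightarrow>
    (\<integral>\<^sup>+w. ennreal (h w * u w) \<partial>M) \<le> ennreal (\<phi> v)) \<Longrightarrow> phi_dominates u"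
  unfolding phi_dominates_def by blast

lemma phi_dominatesD:
  "phi_dominates u \<Longrightarrow> v \<in> V \<Longrightarrow> (\<And>w. 0 \<le> v w) \<Longrightarrow> (AE w in M. y w * u w \<le> v w) \<Longrightarrow>
    (\<integral>\<^sup>+w. ennreal (h w * u w) \<partial>M) \<le> ennreal (\<phi> v)"
  unfolding phi_dominates_def by blast

lemma phi_dominates_indicator:
  assumes A: "A \<in> sets M"
  shows "phi_dominates (indicator A)"
proof (rule phi_dominatesI)
  fix v assume v: "v \<in> V" and le: "AE w in M. y w * indicator A w \<le> v w"
  have "(\<integral>\<^sup>+w. ennreal (h w * indicator A w) \<partial>M) = (\<integral>\<^sup>+w. ennreal (h w) * indicator A w \<partial>M)"
    by (intro nn_integral_cong) (simp split: split_indicator)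
  also have "\<dots> = ennreal (\<phi> (\<lambda>w. y w * indicator A w))" by (rule h_indicator[OF A])
  also have "\<dots> \<le> ennreal (\<phi> v)" using phi_mono[OF y_indicator_V[OF A] v le] by (rule ennreal_leI)
  finally show "(\<integral>\<^sup>+w. ennreal (h w * indicator A w) \<partial>M) \<le> ennreal (\<phi> v)" .
qed

lemma phi_dominates_scale:
  assumes c: "0 \<le> c" and u: "u \<in> borel_measurable M" and dom: "phi_dominates u"
  shows "phi_dominates (\<lambda>w. c * u w)"
proof (cases "c = 0")
  case False
  then have c: "0 < c" using c by simp
  show ?thesis
  proof (rule phi_dominatesI)
    fix v assume v: "v \<in> V" and nonneg: "\<And>w. 0 \<le> v w" and le: "AE w in M. y w * (c * u w) \<le> v w"
    let ?v = "\<lambda>w. (1 / c) * v w"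
    have "AE w in M. y w * u w \<le> ?v w" using le by eventually_elim (use c in \<open>simp add: field_simps\<close>)
    then have IH: "(\<integral>\<^sup>+w. ennreal (h w * u w) \<partial>M) \<le> ennreal (\<phi> ?v)"
      using nonneg c by (intro phi_dominatesD[OF dom fun_subspaceD(3)[OF fun_subspace_V v]]) auto
    have "(\<integral>\<^sup>+w. ennreal (h w * (c * u w)) \<partial>M) = (\<integral>\<^sup>+w. ennreal c * ennreal (h w * u w) \<partial>M)"
      using c by (simp add: mult.left_commute ennreal_mult')
    also have "\<dots> = ennreal c * (\<integral>\<^sup>+w. ennreal (h w * u w) \<partial>M)"
      using h_measurable u by (intro nn_integral_cmult) measurable
    also have "\<dots> \<le> ennreal c * ennreal (\<phi> ?v)" by (rule mult_left_mono[OF IH]) simp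
    also have "\<dots> = ennreal (c * \<phi> ?v)" using c by (simp add: ennreal_mult')
    also have "c * \<phi> ?v = \<phi> v" using c phi_scale[OF v, of "1 / c"] by simp
    finally show "(\<integral>\<^sup>+w. ennreal (h w * (c * u w)) \<partial>M) \<le> ennreal (\<phi> v)" .
  qed
qed (simp add: phi_dominates_def)

lemma nn_integral_h_add:
  assumes "u \<in> borel_measurable M" "\<And>w. 0 \<le> u w" "u' \<in> borel_measurable M" "\<And>w. 0 \<le> u' w"
  shows "(\<integral>\<^sup>+w. ennreal (h w * (u w + u' w)) \<partial>M)
    = (\<integral>\<^sup>+w. ennreal (h w * u w) \<partial>M) + (\<integral>\<^sup>+w. ennreal (h w * u' w) \<partial>M)"
proof -
  have "ennreal (h w * (u w + u' w)) = ennreal (h w * u w) + ennreal (h w * u' w)" for w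
    using h_nonneg[of w] assms(2,4)[of w] by (simp add: distrib_left ennreal_plus)
  then show ?thesis using h_measurable assms(1,3) by (simp add: nn_integral_add)
qed

text \<open>A bound \<open>v\<close> for \<open>y (u' + u)\<close> is split along the support of \<open>u\<close>.\<close>
lemma phi_dominates_add:
  assumes u: "u \<in> borel_measurable M" "\<And>w. 0 \<le> u w" "phi_dominates u"
    and u': "u' \<in> borel_measurable M" "\<And>w. 0 \<le> u' w" "phi_dominates u'"
    and disjoint: "\<And>w. w \<in> space M \<Longrightarrow> u w = 0 \<or> u' w = 0"
  shows "phi_dominates (\<lambda>w. u' w + u w)"
proof (rule phi_dominatesI)
  fix v assume v: "v \<in> V" and nonneg: "\<And>w. 0 \<le> v w" and le: "AE w in M. y w * (u' w + u w) \<le> v w"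
  let ?S = "{w \<in> space M. u w \<noteq> 0}"
  have S: "?S \<in> sets M" using u(1) by measurable
  let ?v1 = "\<lambda>w. v w * indicator ?S w" and ?v2 = "\<lambda>w. v w - v w * indicator ?S w"
  note split = phi_split[OF v S]
  have v12: "0 \<le> ?v1 w" "0 \<le> ?v2 w" for w using nonneg[of w] by (auto simp: indicator_def)
  have "AE w in M. y w * u w \<le> ?v1 w \<and> y w * u' w \<le> ?v2 w"
    using le AE_space
  proof eventually_elim
    case (elim w)
    show ?case
    proof (cases "u w = 0")
      case True
      then show ?thesis using elim(1) nonneg[of w] by (simp add: indicator_def)
    next
      case False
      then have "u' w = 0" using disjoint[OF elim(2)] by simp
      then show ?thesis using elim False by (simp add: indicator_def)
    qed
  qed
  then have ae1: "AE w in M. y w * u w \<le> ?v1 w" and ae2: "AE w in M. y w * u' w \<le> ?v2 w"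
    by (auto elim: eventually_mono)
  have "(\<integral>\<^sup>+w. ennreal (h w * (u' w + u w)) \<partial>M)
      = (\<integral>\<^sup>+w. ennreal (h w * u' w) \<partial>M) + (\<integral>\<^sup>+w. ennreal (h w * u w) \<partial>M)"
    by (rule nn_integral_h_add[OF u'(1,2) u(1,2)])
  also have "\<dots> \<le> ennreal (\<phi> ?v2) + ennreal (\<phi> ?v1)"
    using phi_dominatesD[OF u(3) split(1) v12(1) ae1] phi_dominatesD[OF u'(3) split(2) v12(2) ae2]
    by (rule add_mono[rotated])
  also have "\<dots> = ennreal (\<phi> ?v2 + \<phi> ?v1)"
    using ennreal_plus[OF phi_nonneg[OF split(2) AE_I2[OF v12(2)]] phi_nonneg[OF split(1) AE_I2[OF v12(1)]]]
    by simp
  also have "\<phi> ?v2 + \<phi> ?v1 = \<phi> v" using split(3) by linarith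
  finally show "(\<integral>\<^sup>+w. ennreal (h w * (u' w + u w)) \<partial>M) \<le> ennreal (\<phi> v)" .
qed

lemma phi_dominates_incseq_limit:
  assumes U: "\<And>i. U i \<in> borel_measurable M" "incseq U" "\<And>i. phi_dominates (U i)"
    and lim: "\<And>w. w \<in> space M \<Longrightarrow> (\<lambda>i. U i w) \<longlonglongrightarrow> u w"
  shows "phi_dominates u"
proof (rule phi_dominatesI)
  fix v assume v: "v \<in> V" and nonneg: "\<And>w. 0 \<le> v w" and le: "AE w in M. y w * u w \<le> v w"
  have U_le: "U i w \<le> u w" if "w \<in> space M" for i w
  proof (rule incseq_le)
    show "incseq (\<lambda>i. U i w)" using U(2) by (auto simp: incseq_def le_fun_def)
    show "(\<lambda>i. U i w) \<longlonglongrightarrow> u w" using lim[OF that] .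
  qed
  have bnd: "(\<integral>\<^sup>+w. ennreal (h w * U i w) \<partial>M) \<le> ennreal (\<phi> v)" for i
  proof (rule phi_dominatesD[OF U(3) v nonneg])
    show "AE w in M. y w * U i w \<le> v w"
      using le AE_space
    proof eventually_elim
      case (elim w)
      have "y w * U i w \<le> y w * u w" using U_le[OF elim(2)] y_nonneg by (rule mult_left_mono)
      then show ?case using elim(1) by linarith
    qed
  qed
  let ?f = "\<lambda>i w. ennreal (h w * U i w) * indicator (space M) w"
  have "(\<lambda>i. \<integral>\<^sup>+w. ?f i w \<partial>M) \<longlonglongrightarrow> (\<integral>\<^sup>+w. ennreal (h w * u w) * indicator (space M) w \<partial>M)"
  proof (rule nn_integral_LIMSEQ)
    show "incseq ?f"
    proof (intro monoI le_funI mult_right_mono ennreal_leI mult_left_mono)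
      fix m n :: nat and w assume "m \<le> n"
      then show "U m w \<le> U n w" using U(2) by (simp add: incseq_def le_fun_def)
    qed (simp_all add: h_nonneg)
    show "?f i \<in> borel_measurable M" for i
      using h_measurable U(1)[of i] by measurable
    show "(\<lambda>i. ?f i w) \<longlonglongrightarrow> ennreal (h w * u w) * indicator (space M) w" for w
      by (cases "w \<in> space M") (auto intro!: tendsto_ennrealI tendsto_mult_left lim)
  qed
  moreover have "(\<integral>\<^sup>+w. g w * indicator (space M) w \<partial>M) = (\<integral>\<^sup>+w. g w \<partial>M)" for g :: "'a \<Rightarrow> ennreal"
    by (intro nn_integral_cong) simp
  ultimately have "(\<lambda>i. \<integral>\<^sup>+w. ennreal (h w * U i w) \<partial>M) \<longlonglongrightarrow> (\<integral>\<^sup>+w. ennreal (h w * u w) \<partial>M)"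
    by simp
  then show "(\<integral>\<^sup>+w. ennreal (h w * u w) \<partial>M) \<le> ennreal (\<phi> v)" using LIMSEQ_le_const2 bnd by blast
qed

lemma phi_dominates_measurable:
  "u \<in> borel_measurable M \<Longrightarrow> (\<And>w. 0 \<le> u w) \<Longrightarrow> phi_dominates u"
proof (induction u rule: borel_measurable_induct_real)
  case (set A)
  then show ?case by (rule phi_dominates_indicator)
next
  case (mult u c)
  show ?case by (rule phi_dominates_scale[OF mult.hyps(1,2) mult.IH])
next
  case (add u u')
  show ?case by (rule phi_dominates_add[OF add.hyps(1,2) add.IH(1) add.hyps(3,4) add.IH(2) add.hyps(5)])
next
  case (seq U)
  show ?case by (rule phi_dominates_incseq_limit[OF seq.hyps(1,3) seq.IH seq.hyps(4)])
qed

definition norming_fun :: "'a \<Rightarrow> real" where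
  "norming_fun w = (if 0 < y w then h w / y w else 0)"

lemma norming_fun_measurable: "norming_fun \<in> borel_measurable M"
  unfolding norming_fun_def using h_measurable y_measurable by measurable

lemma norming_fun_nonneg: "0 \<le> norming_fun w"
  using h_nonneg[of w] y_nonneg[of w] by (simp add: norming_fun_def)

lemma nn_integral_norming_fun_le:
  assumes z: "z \<in> V" and z_nonneg: "\<And>w. 0 \<le> z w"
  shows "(\<integral>\<^sup>+w. ennreal (norming_fun w * z w) \<partial>M) \<le> ennreal (nrm E z)"
proof -
  define u where "u w = (if 0 < y w then z w / y w else 0)" for w
  have "u \<in> borel_measurable M" unfolding u_def using V_measurable[OF z] y_measurable by measurable
  moreover have "0 \<le> u w" for w using z_nonneg[of w] y_nonneg[of w] by (simp add: u_def)
  moreover have "AE w in M. y w * u w \<le> z w" using z_nonneg by (intro AE_I2) (simp add: u_def)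
  ultimately have "(\<integral>\<^sup>+w. ennreal (h w * u w) \<partial>M) \<le> ennreal (\<phi> z)"
    using phi_dominates_measurable phi_dominatesD z z_nonneg by blast
  moreover have "norming_fun w * z w = h w * u w" for w by (simp add: norming_fun_def u_def)
  ultimately show ?thesis using ennreal_leI[OF phi_le_nrm[OF z]] by (simp add: order_trans)
qed

lemma norming_fun_pairing:
  assumes x: "x \<in> V"
  shows "integrable M (\<lambda>w. norming_fun w * x w)" "integral\<^sup>L M (\<lambda>w. norming_fun w * x w) \<le> nrm E x"
proof -
  have xm: "x \<in> borel_measurable M" using V_measurable[OF x] .
  have ax: "(\<lambda>w. \<bar>x w\<bar>) \<in> V" using xm by (intro V_solid[OF x]) auto
  have nax: "nrm E (\<lambda>w. \<bar>x w\<bar>) \<le> nrm E x"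
    using E_solid[of x "\<lambda>w. \<bar>x w\<bar>"] x V_subset xm by auto
  have fx: "(\<lambda>w. norming_fun w * x w) \<in> borel_measurable M" using norming_fun_measurable xm by measurable
  have abs_eq: "\<bar>norming_fun w * x w\<bar> = norming_fun w * \<bar>x w\<bar>" for w
    using norming_fun_nonneg[of w] by (simp add: abs_mult)
  have bnd: "(\<integral>\<^sup>+w. ennreal (\<bar>norming_fun w * x w\<bar>) \<partial>M) \<le> ennreal (nrm E (\<lambda>w. \<bar>x w\<bar>))"
    using nn_integral_norming_fun_le[OF ax] by (simp add: abs_eq)
  then show int: "integrable M (\<lambda>w. norming_fun w * x w)"
    using fx by (intro integrableI_bounded) (auto simp: top.not_eq_extremum intro: le_less_trans)
  have "integral\<^sup>L M (\<lambda>w. norming_fun w * x w) \<le> integral\<^sup>L M (\<lambda>w. \<bar>norming_fun w * x w\<bar>)"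
    using int by (intro integral_mono) auto
  also have "\<dots> = enn2real (\<integral>\<^sup>+w. ennreal (\<bar>norming_fun w * x w\<bar>) \<partial>M)"
    using fx by (intro integral_eq_nn_integral) auto
  also have "\<dots> \<le> nrm E (\<lambda>w. \<bar>x w\<bar>)"
    using enn2real_mono[OF bnd] normed_idealD(5)[OF normed_ideal_V ax] by simp
  finally show "integral\<^sup>L M (\<lambda>w. norming_fun w * x w) \<le> nrm E x" using nax by simp
qed

lemma norming_fun_dual:
  "norming_fun \<in> elts (dual M (ocpart M E))" "nrm (dual M (ocpart M E)) norming_fun \<le> 1"
  using dual_memI[OF normed_ideal_V norming_fun_measurable, of 1] norming_fun_pairing by force+

lemma norming_fun_y: "integral\<^sup>L M (\<lambda>w. norming_fun w * y w) = nrm E y"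
proof -
  let ?S = "{w \<in> space M. 0 < y w}"
  have S: "?S \<in> sets M" using y_measurable by measurable
  have "(\<integral>\<^sup>+w. ennreal (norming_fun w * y w) \<partial>M) = (\<integral>\<^sup>+w. ennreal (h w) * indicator ?S w \<partial>M)"
    by (intro nn_integral_cong) (auto simp: norming_fun_def indicator_def)
  also have "\<dots> = ennreal (\<phi> (\<lambda>w. y w * indicator ?S w))" by (rule h_indicator[OF S])
  also have "\<phi> (\<lambda>w. y w * indicator ?S w) = \<phi> y"
    using y_nonneg by (intro phi_cong[OF y_indicator_V[OF S] y] AE_I2) (auto simp: indicator_def order.order_iff_strict)
  finally have "(\<integral>\<^sup>+w. ennreal (norming_fun w * y w) \<partial>M) = ennreal (nrm E y)" by (simp add: phi_y_nrm)
  then show ?thesis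
    using norming_fun_measurable y_measurable norming_fun_nonneg y_nonneg normed_idealD(5)[OF normed_ideal_V y]
    by (subst integral_eq_nn_integral) auto
qed

end

lemma exists_norming_functional:
  assumes "BIS M E" "foundation M (ocpart M E) E" "direct_sum_property M"
    and "y \<in> elts (ocpart M E)" "\<And>w. 0 \<le> y w"
  obtains f where "f \<in> elts (dual M (ocpart M E))" "nrm (dual M (ocpart M E)) f \<le> 1"
    "integral\<^sup>L M (\<lambda>w. f w * y w) = nrm E y"
proof -
  interpret norming_setup M E y using assms by unfold_locales
  obtain \<phi> where \<phi>: "\<And>x z. x \<in> V \<Longrightarrow> z \<in> V \<Longrightarrow> \<phi> (\<lambda>w. x w + z w) = \<phi> x + \<phi> z"
    "\<And>c x. x \<in> V \<Longrightarrow> \<phi> (\<lambda>w. c * x w) = c * \<phi> x"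
    "\<And>x. x \<in> V \<Longrightarrow> \<phi> x \<le> pos_nrm x" "\<phi> y = pos_nrm y"
    using exists_functional by blast
  interpret norming_functional M E y \<phi> by unfold_locales (use \<phi> in auto)
  obtain h where h: "h \<in> borel_measurable M" "\<And>w. 0 \<le> h w"
    "\<And>A. A \<in> sets M \<Longrightarrow> (\<integral>\<^sup>+w. ennreal (h w) * indicator A w \<partial>M) = ennreal (\<phi> (\<lambda>w. y w * indicator A w))"
    using exists_density by blast
  interpret norming_density M E y \<phi> h by unfold_locales (use h in auto)
  show ?thesis using that norming_fun_dual norming_fun_y by blast
qed

section \<open>The order continuous part of the bidual\<close>

lemma max_width_mono: "S \<subseteq> T \<Longrightarrow> max_width M S \<Longrightarrow> max_width M T"
  unfolding max_width_def by blast

text \<open>In an ideal of maximal width, \<open>\<bar>x\<bar>\<close> is the supremum of the elements of the ideal below it.\<close>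
lemma max_width_gap_AE_le_0:
  assumes A: "normed_ideal M A" and mw: "max_width M (elts A)"
    and xm: "x \<in> borel_measurable M" and zm: "z \<in> borel_measurable M"
    and below: "\<And>y. y \<in> elts A \<Longrightarrow> (\<And>w. 0 \<le> y w \<and> y w \<le> \<bar>x w\<bar>) \<Longrightarrow> AE w in M. z w \<le> \<bar>x w\<bar> - y w"
  shows "AE w in M. z w \<le> 0"
proof -
  let ?N = "{w \<in> space M. 0 < z w}"
  have "AE w in M. indicator ?N w * y w = 0" if y: "y \<in> elts A" for y
  proof -
    define Y where "Y n w = min \<bar>x w\<bar> (real n * \<bar>y w\<bar>)" for n w
    have YA: "Y n \<in> elts A" for n
    proof -
      have "Y n \<in> borel_measurable M" unfolding Y_def using xm normed_ideal_measurable[OF A y] by measurable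
      moreover have "AE w in M. \<bar>Y n w\<bar> \<le> \<bar>real n * y w\<bar>" by (intro AE_I2) (auto simp: Y_def abs_mult)
      ultimately show ?thesis using solidD[OF normed_idealD(7)[OF A] normed_idealD(4)[OF A y]] by blast
    qed
    have "AE w in M. z w \<le> \<bar>x w\<bar> - Y n w" for n by (rule below[OF YA]) (auto simp: Y_def)
    then have "AE w in M. \<forall>n. z w \<le> \<bar>x w\<bar> - Y n w" by (simp add: AE_all_countable)
    then show ?thesis
    proof eventually_elim
      case (elim w)
      show ?case
      proof (rule ccontr)
        assume "indicator ?N w * y w \<noteq> 0"
        then have pos: "0 < z w" "0 < \<bar>y w\<bar>" by (auto simp: indicator_def split: if_splits)
        obtain n where "\<bar>x w\<bar> / \<bar>y w\<bar> < real n" using reals_Archimedean2 by blast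
        then have "Y n w = \<bar>x w\<bar>" using pos by (simp add: Y_def divide_less_eq)
        then show False using elim[rule_format, of n] pos by simp
      qed
    qed
  qed
  moreover have "indicator ?N \<in> borel_measurable M" using zm by measurable
  ultimately have "AE w in M. indicator ?N w = (0::real)"
    using mw unfolding max_width_def by blast
  then show ?thesis using AE_space by eventually_elim (auto simp: indicator_def split: if_splits)
qed

text \<open>Order continuity of \<open>x\<close> in the bidual, applied to the downward directed set
  \<open>{\<bar>x\<bar> - y | y \<in> A, 0 \<le> y \<le> \<bar>x\<bar>}\<close> whose infimum is \<open>0\<close>.\<close>
lemma ocpart_bidual_approx:
  assumes A: "normed_ideal M A" and mw: "max_width M (elts A)"
    and x: "x \<in> elts (ocpart M (dual M (dual M A)))" and e: "0 < e"
  shows "\<exists>y\<in>elts A. (\<forall>w. 0 \<le> y w \<and> y w \<le> \<bar>x w\<bar>) \<and> nrm (dual M (dual M A)) (\<lambda>w. \<bar>x w\<bar> - y w) < e"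
proof -
  let ?Y = "{y \<in> elts A. \<forall>w. 0 \<le> y w \<and> y w \<le> \<bar>x w\<bar>}"
  let ?D = "(\<lambda>y w. \<bar>x w\<bar> - y w) ` ?Y"
  have xG: "x \<in> elts (dual M (dual M A))" and oc: "ord_cont_at M (dual M (dual M A)) x"
    using x by (auto simp: ocpart_def)
  have xm: "x \<in> borel_measurable M" using dual_memD(1)[OF xG] .
  have inD: "(\<lambda>w. \<bar>x w\<bar> - y w) \<in> ?D" if "y \<in> elts A" "\<And>w. 0 \<le> y w \<and> y w \<le> \<bar>x w\<bar>" for y
    using that by (intro imageI) blast
  have "\<exists>d\<in>?D. nrm (dual M (dual M A)) d < e"
  proof (rule ord_cont_atD[OF oc _ _ _ _ _ e])
    show "?D \<noteq> {}" using inD[OF normed_idealD(2)[OF A]] by force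
    show "?D \<subseteq> borel_measurable M"
    proof
      fix d assume "d \<in> ?D"
      then obtain y where "y \<in> elts A" "d = (\<lambda>w. \<bar>x w\<bar> - y w)" by blast
      then show "d \<in> borel_measurable M" using xm normed_ideal_measurable[OF A] by simp
    qed
    show "AE w in M. 0 \<le> d w \<and> d w \<le> \<bar>x w\<bar>" if "d \<in> ?D" for d
      using that by (auto intro!: AE_I2)
    show "\<exists>d\<in>?D. AE w in M. d w \<le> u w \<and> d w \<le> v w" if u: "u \<in> ?D" and v: "v \<in> ?D" for u v
    proof -
      obtain y1 where y1: "y1 \<in> ?Y" "u = (\<lambda>w. \<bar>x w\<bar> - y1 w)" using u by (rule imageE)
      obtain y2 where y2: "y2 \<in> ?Y" "v = (\<lambda>w. \<bar>x w\<bar> - y2 w)" using v by (rule imageE)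
      let ?y = "\<lambda>w. max (y1 w) (y2 w)"
      have b1: "0 \<le> y1 w \<and> y1 w \<le> \<bar>x w\<bar>" and b2: "0 \<le> y2 w \<and> y2 w \<le> \<bar>x w\<bar>" for w
        using y1(1) y2(1) by blast+
      have "?y \<in> elts A" using y1(1) y2(1) b1 b2 by (intro normed_ideal_max[OF A]) auto
      show ?thesis
      proof (rule bexI[where x = "\<lambda>w. \<bar>x w\<bar> - ?y w"])
        show "(\<lambda>w. \<bar>x w\<bar> - ?y w) \<in> ?D"
          using \<open>?y \<in> elts A\<close> by (rule inD) (use b1 b2 in \<open>auto simp: max_def\<close>)
        show "AE w in M. \<bar>x w\<bar> - ?y w \<le> u w \<and> \<bar>x w\<bar> - ?y w \<le> v w"
          unfolding y1(2) y2(2) by (intro AE_I2) simp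
      qed
    qed
    show "AE w in M. z w \<le> 0"
      if z: "z \<in> borel_measurable M" and below: "\<And>d. d \<in> ?D \<Longrightarrow> AE w in M. z w \<le> d w" for z
    proof (rule max_width_gap_AE_le_0[OF A mw xm z])
      fix y assume "y \<in> elts A" "\<And>w. 0 \<le> y w \<and> y w \<le> \<bar>x w\<bar>"
      then show "AE w in M. z w \<le> \<bar>x w\<bar> - y w" using below[OF inD] by simp
    qed
  qed
  then show ?thesis by blast
qed

primrec running_max :: "(nat \<Rightarrow> 'a \<Rightarrow> real) \<Rightarrow> nat \<Rightarrow> 'a \<Rightarrow> real" where
  "running_max Y 0 = Y 0"
| "running_max Y (Suc n) = (\<lambda>w. max (running_max Y n w) (Y (Suc n) w))"

lemma running_max_ge: "Y n w \<le> running_max Y n w"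
  by (cases n) auto

lemma running_max_mono: "n \<le> m \<Longrightarrow> running_max Y n w \<le> running_max Y m w"
proof (induction m)
  case (Suc m)
  then show ?case by (cases "n = Suc m") (auto intro: order_trans)
qed simp

lemma running_max_bounds:
  "(\<And>n. 0 \<le> Y n w \<and> Y n w \<le> b) \<Longrightarrow> 0 \<le> running_max Y n w \<and> running_max Y n w \<le> b"
  by (induction n) (auto simp: max_def)

lemma running_max_mem:
  assumes A: "normed_ideal M A" and Y: "\<And>n. Y n \<in> elts A" and nonneg: "\<And>n w. 0 \<le> Y n w"
  shows "running_max Y n \<in> elts A"
proof (induction n)
  case (Suc n)
  have "0 \<le> running_max Y n w" for w by (induction n) (simp_all add: nonneg le_max_iff_disj)
  then show ?case using normed_ideal_max[OF A Suc _ Y nonneg] by simp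
qed (simp add: Y)

lemma nrm_le_bidual_nrm_ocpart:
  assumes E: "BIS M E" and F: "foundation M (ocpart M E) E" and dsp: "direct_sum_property M"
    and y: "y \<in> elts (ocpart M E)"
  shows "nrm E y \<le> nrm (dual M (dual M (ocpart M E))) y"
proof -
  let ?G = "dual M (dual M (ocpart M E))"
  have E0: "normed_ideal M (ocpart M E)" using ocpart_normed_ideal[OF BIS_normed_ideal[OF E] F] .
  have ym: "y \<in> borel_measurable M" using normed_ideal_measurable[OF E0 y] .
  have aym: "(\<lambda>w. \<bar>y w\<bar>) \<in> borel_measurable M" using ym by measurable
  have ay: "(\<lambda>w. \<bar>y w\<bar>) \<in> elts (ocpart M E)"
    using solidD[OF normed_idealD(7)[OF E0] y aym] by simp
  obtain f where f: "f \<in> elts (dual M (ocpart M E))" "nrm (dual M (ocpart M E)) f \<le> 1"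
    and norming: "integral\<^sup>L M (\<lambda>w. f w * \<bar>y w\<bar>) = nrm E (\<lambda>w. \<bar>y w\<bar>)"
    using exists_norming_functional[OF E F dsp ay] by auto
  have yG: "y \<in> elts ?G" and ayG: "(\<lambda>w. \<bar>y w\<bar>) \<in> elts ?G"
    using subset1_bidual[OF E0] y ay unfolding subset1_def by auto
  have "nrm E y \<le> nrm E (\<lambda>w. \<bar>y w\<bar>)"
    using solidD[OF normed_idealD(7)[OF BIS_normed_ideal[OF E]] _ ym] ay by (auto simp: ocpart_def)
  also have "\<dots> = integral\<^sup>L M (\<lambda>w. \<bar>y w\<bar> * f w)" using norming by (simp add: mult.commute)
  also have "\<dots> \<le> nrm ?G (\<lambda>w. \<bar>y w\<bar>)" by (rule dual_upper[OF ayG f])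
  also have "\<dots> \<le> nrm ?G y"
    using solidD[OF normed_idealD(7)[OF normed_ideal_dual[OF normed_ideal_dual[OF E0]]] yG aym] by simp
  finally show ?thesis .
qed

lemma bidual_nrm_eq_0_imp_AE_zero:
  assumes A: "normed_ideal M A" and mw: "max_width M (elts (dual M A))"
    and v: "v \<in> elts (dual M (dual M A))" and v0: "nrm (dual M (dual M A)) v = 0"
  shows "AE w in M. v w = 0"
proof -
  have vm: "v \<in> borel_measurable M" using dual_memD(1)[OF v] .
  have "AE w in M. v w * f w = 0" if f: "f \<in> elts (dual M A)" for f
  proof -
    let ?g = "\<lambda>w. sgn (v w * f w) * f w"
    note g = sgn_multiplier[OF normed_ideal_dual[OF A] f vm]
    have int: "integrable M (\<lambda>w. \<bar>v w * f w\<bar>)" using dual_memD(2)[OF v g(1)] g(3) by simp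
    have "integral\<^sup>L M (\<lambda>w. \<bar>v w * f w\<bar>) \<le> nrm (dual M (dual M A)) v * nrm (dual M A) ?g"
      using dual_pairing_le[OF normed_ideal_dual[OF A] v g(1)] g(3) by simp
    then have "integral\<^sup>L M (\<lambda>w. \<bar>v w * f w\<bar>) = 0" using v0 by (simp add: antisym)
    then show ?thesis using integral_nonneg_eq_0_iff_AE[OF int] by simp
  qed
  then show ?thesis using mw vm unfolding max_width_def by blast
qed

lemma BIS_incseq_limit:
  assumes E: "BIS M E" and Z: "\<And>n. Z n \<in> elts E" and mono: "\<And>n m w. n \<le> m \<Longrightarrow> Z n w \<le> Z m w"
    and Cauchy: "\<forall>e>0. \<exists>N. \<forall>m\<ge>N. \<forall>n\<ge>N. nrm E (\<lambda>w. Z m w - Z n w) < e"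
  obtains z where "z \<in> elts E" "(\<lambda>n. nrm E (\<lambda>w. Z n w - z w)) \<longlonglongrightarrow> 0" "\<And>n. AE w in M. Z n w \<le> z w"
proof -
  have EI: "normed_ideal M E" using BIS_normed_ideal[OF E] .
  obtain z where z: "z \<in> elts E" and lim: "(\<lambda>n. nrm E (\<lambda>w. Z n w - z w)) \<longlonglongrightarrow> 0"
    using BIS_Cauchy_convergent[OF E Z Cauchy] by blast
  have "AE w in M. Z n w \<le> z w" for n
  proof -
    let ?q = "\<lambda>w. max (Z n w - z w) 0"
    have diff: "(\<lambda>w. Z m w - z w) \<in> elts E" for m using normed_ideal_diff[OF EI Z z] .
    have qm: "?q \<in> borel_measurable M"
      using normed_ideal_measurable[OF EI Z] normed_ideal_measurable[OF EI z] by measurable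
    have q: "?q \<in> elts E \<and> nrm E ?q \<le> nrm E (\<lambda>w. Z m w - z w)" if "n \<le> m" for m
    proof (rule solidD[OF normed_idealD(7)[OF EI] diff qm])
      have "\<bar>?q w\<bar> \<le> \<bar>Z m w - z w\<bar>" for w using mono[OF that, of w] by (simp add: max_def)
      then show "AE w in M. \<bar>?q w\<bar> \<le> \<bar>Z m w - z w\<bar>" by simp
    qed
    have "nrm E ?q \<le> 0" using q by (intro LIMSEQ_le_const[OF lim]) blast
    then have "nrm E ?q = 0" using normed_idealD(5)[OF EI] q[OF order_refl] by (simp add: antisym)
    then have "AE w in M. ?q w = 0" using BIS_nrm_eq_0_iff[OF E] q[OF order_refl] by simp
    then show ?thesis by eventually_elim (simp add: max_def split: if_splits)
  qed
  with z lim that show ?thesis by blast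
qed

lemma normed_ideal_abs_diff:
  assumes G: "normed_ideal M G" and x: "x \<in> elts G"
    and z: "z \<in> borel_measurable M" "\<And>w. 0 \<le> z w \<and> z w \<le> \<bar>x w\<bar>"
  shows "(\<lambda>w. \<bar>x w\<bar> - z w) \<in> elts G"
proof (rule conjunct1[OF solidD[OF normed_idealD(7)[OF G] x]])
  show "(\<lambda>w. \<bar>x w\<bar> - z w) \<in> borel_measurable M" using normed_ideal_measurable[OF G x] z(1) by measurable
  have "\<bar>\<bar>x w\<bar> - z w\<bar> \<le> \<bar>x w\<bar>" for w using z(2)[of w] by arith
  then show "AE w in M. \<bar>\<bar>x w\<bar> - z w\<bar> \<le> \<bar>x w\<bar>" by simp
qed

lemma ocpart_bidual_incseq_approx:
  assumes A: "normed_ideal M A" and mw: "max_width M (elts A)"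
    and x: "x \<in> elts (ocpart M (dual M (dual M A)))"
  obtains Z where "\<And>n. Z n \<in> elts A" "\<And>n w. 0 \<le> Z n w \<and> Z n w \<le> \<bar>x w\<bar>"
    "\<And>n m w. n \<le> m \<Longrightarrow> Z n w \<le> Z m w"
    "\<And>n. nrm (dual M (dual M A)) (\<lambda>w. \<bar>x w\<bar> - Z n w) < 1 / Suc n"
proof -
  let ?G = "dual M (dual M A)"
  have "\<forall>n. \<exists>y\<in>elts A. (\<forall>w. 0 \<le> y w \<and> y w \<le> \<bar>x w\<bar>) \<and> nrm ?G (\<lambda>w. \<bar>x w\<bar> - y w) < 1 / Suc n"
    using ocpart_bidual_approx[OF A mw x] by simp
  then obtain Y where Y: "\<And>n. Y n \<in> elts A" "\<And>n w. 0 \<le> Y n w \<and> Y n w \<le> \<bar>x w\<bar>"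
    and Y_approx: "\<And>n. nrm ?G (\<lambda>w. \<bar>x w\<bar> - Y n w) < 1 / Suc n"
    by metis
  have G: "normed_ideal M ?G" using normed_ideal_dual[OF normed_ideal_dual[OF A]] .
  have xG: "x \<in> elts ?G" using x by (simp add: ocpart_def)
  have Z: "running_max Y n \<in> elts A" for n using running_max_mem[of M A Y, OF A Y(1)] Y(2) by blast
  have Zb: "0 \<le> running_max Y n w \<and> running_max Y n w \<le> \<bar>x w\<bar>" for n w
    using Y(2) by (rule running_max_bounds)
  have le: "nrm ?G (\<lambda>w. \<bar>x w\<bar> - running_max Y n w) \<le> nrm ?G (\<lambda>w. \<bar>x w\<bar> - Y n w)" for n
  proof (rule conjunct2[OF solidD[OF normed_idealD(7)[OF G]]])
    show "(\<lambda>w. \<bar>x w\<bar> - Y n w) \<in> elts ?G"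
      using normed_ideal_abs_diff[OF G xG normed_ideal_measurable[OF A Y(1)] Y(2)] .
    show "(\<lambda>w. \<bar>x w\<bar> - running_max Y n w) \<in> borel_measurable M"
      using normed_ideal_measurable[OF G normed_ideal_abs_diff[OF G xG normed_ideal_measurable[OF A Z] Zb]] .
    show "AE w in M. \<bar>\<bar>x w\<bar> - running_max Y n w\<bar> \<le> \<bar>\<bar>x w\<bar> - Y n w\<bar>"
      using Zb running_max_ge[of Y n] Y(2) by (intro AE_I2) (simp add: abs_of_nonneg)
  qed
  have "nrm ?G (\<lambda>w. \<bar>x w\<bar> - running_max Y n w) < 1 / Suc n" for n
    using le[of n] Y_approx[of n] by linarith
  with Z Zb show ?thesis by (intro that[of "running_max Y"]) (auto intro: running_max_mono)
qed

text \<open>On \<open>E\<^sub>0\<close> the bidual norm dominates the norm of \<open>E\<close>.\<close>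
lemma ocpart_approx_Cauchy:
  assumes E: "BIS M E" and F: "foundation M (ocpart M E) E" and dsp: "direct_sum_property M"
    and x: "x \<in> elts (dual M (dual M (ocpart M E)))"
    and Z: "\<And>n. Z n \<in> elts (ocpart M E)" "\<And>n w. 0 \<le> Z n w \<and> Z n w \<le> \<bar>x w\<bar>"
    and approx: "\<And>n. nrm (dual M (dual M (ocpart M E))) (\<lambda>w. \<bar>x w\<bar> - Z n w) < 1 / Suc n"
  shows "\<forall>e>0. \<exists>N. \<forall>m\<ge>N. \<forall>n\<ge>N. nrm E (\<lambda>w. Z m w - Z n w) < e"
proof (rule Cauchy_if_le_inverse_Suc)
  fix m n
  let ?G = "dual M (dual M (ocpart M E))"
  have E0: "normed_ideal M (ocpart M E)" using ocpart_normed_ideal[OF BIS_normed_ideal[OF E] F] .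
  have G: "normed_ideal M ?G" using normed_ideal_dual[OF normed_ideal_dual[OF E0]] .
  have gap: "(\<lambda>w. \<bar>x w\<bar> - Z k w) \<in> elts ?G" for k
    using normed_ideal_abs_diff[OF G x normed_ideal_measurable[OF E0 Z(1)] Z(2)] .
  have diff: "(\<lambda>w. Z m w - Z n w) \<in> elts (ocpart M E)" using normed_ideal_diff[OF E0 Z(1) Z(1)] .
  have "nrm E (\<lambda>w. Z m w - Z n w) \<le> nrm ?G (\<lambda>w. Z m w - Z n w)"
    by (rule nrm_le_bidual_nrm_ocpart[OF E F dsp diff])
  also have "\<dots> \<le> nrm ?G (\<lambda>w. (\<bar>x w\<bar> - Z n w) + (\<bar>x w\<bar> - Z m w))"
  proof (rule conjunct2[OF solidD[OF normed_idealD(7)[OF G] normed_idealD(3)[OF G gap gap]]])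
    show "(\<lambda>w. Z m w - Z n w) \<in> borel_measurable M" using normed_ideal_measurable[OF E0 diff] .
    have "\<bar>Z m w - Z n w\<bar> \<le> \<bar>(\<bar>x w\<bar> - Z n w) + (\<bar>x w\<bar> - Z m w)\<bar>" for w
      using Z(2)[of m w] Z(2)[of n w] by arith
    then show "AE w in M. \<bar>Z m w - Z n w\<bar> \<le> \<bar>(\<bar>x w\<bar> - Z n w) + (\<bar>x w\<bar> - Z m w)\<bar>" by simp
  qed
  also have "\<dots> \<le> nrm ?G (\<lambda>w. \<bar>x w\<bar> - Z n w) + nrm ?G (\<lambda>w. \<bar>x w\<bar> - Z m w)"
    by (rule dual_add(2)[OF normed_ideal_dual[OF E0] gap gap])
  also have "\<dots> < 1 / Suc n + 1 / Suc m" using approx[of n] approx[of m] by simp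
  finally show "nrm E (\<lambda>w. Z m w - Z n w) < 1 / Suc n + 1 / Suc m" .
qed

text \<open>The excess of \<open>\<bar>x\<bar>\<close> over \<open>z\<close> has bidual norm \<open>0\<close>, and the bidual norm is definite when
  the dual has maximal width.\<close>
lemma bidual_approx_dominated:
  assumes A: "normed_ideal M A" and mw: "max_width M (elts (dual M A))"
    and x: "x \<in> elts (dual M (dual M A))"
    and Z: "\<And>n. Z n \<in> borel_measurable M" "\<And>n w. 0 \<le> Z n w \<and> Z n w \<le> \<bar>x w\<bar>"
    and approx: "\<And>n. nrm (dual M (dual M A)) (\<lambda>w. \<bar>x w\<bar> - Z n w) < 1 / Suc n"
    and z: "z \<in> borel_measurable M" and below: "\<And>n. AE w in M. Z n w \<le> z w"
  shows "AE w in M. \<bar>x w\<bar> \<le> \<bar>z w\<bar>"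
proof -
  let ?G = "dual M (dual M A)" and ?b = "\<lambda>w. max (\<bar>x w\<bar> - z w) 0"
  have G: "normed_ideal M ?G" using normed_ideal_dual[OF normed_ideal_dual[OF A]] .
  have b: "?b \<in> elts ?G \<and> nrm ?G ?b \<le> nrm ?G (\<lambda>w. \<bar>x w\<bar> - Z n w)" for n
  proof (rule solidD[OF normed_idealD(7)[OF G] normed_ideal_abs_diff[OF G x Z]])
    show "?b \<in> borel_measurable M" using dual_memD(1)[OF x] z by measurable
    show "AE w in M. \<bar>?b w\<bar> \<le> \<bar>\<bar>x w\<bar> - Z n w\<bar>"
      using below[of n]
    proof eventually_elim
      case (elim w)
      then show ?case using Z(2)[of n w] by (simp add: max_def)
    qed
  qed
  have "nrm ?G ?b \<le> 0"
  proof (rule le_0_if_le_inverse_Suc)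
    show "nrm ?G ?b \<le> 1 / Suc n" for n using b[of n] approx[of n] by linarith
  qed
  then have "nrm ?G ?b = 0" using normed_idealD(5)[OF G] b[of 0] by (simp add: antisym)
  then have "AE w in M. ?b w = 0" using bidual_nrm_eq_0_imp_AE_zero[OF A mw] b[of 0] by blast
  then show ?thesis by eventually_elim (simp add: max_def split: if_splits)
qed

lemma ocpart_bidual_ocpart_mem:
  assumes dsp: "direct_sum_property M" and J: "J0 M E"
    and x: "x \<in> elts (ocpart M (dual M (dual M (ocpart M E))))"
  shows "x \<in> elts E \<and> nrm E x \<le> nrm (dual M (dual M (ocpart M E))) x"
proof -
  let ?E0 = "ocpart M E" and ?G = "dual M (dual M (ocpart M E))"
  have E: "BIS M E" and F: "foundation M ?E0 E" and F': "foundation M (ocpart M (dual M E)) (dual M E)"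
    using J by (simp_all add: J0_def)
  have EI: "normed_ideal M E" using BIS_normed_ideal[OF E] .
  have E0: "normed_ideal M ?E0" using ocpart_normed_ideal[OF EI F] .
  have G: "normed_ideal M ?G" using normed_ideal_dual[OF normed_ideal_dual[OF E0]] .
  have xG: "x \<in> elts ?G" using x by (simp add: ocpart_def)
  have "elts (ocpart M (dual M E)) \<subseteq> elts (dual M ?E0)"
    using dual_antimono[OF E0 subset1_ocpart] by (auto simp: subset1_def ocpart_def)
  then have mw: "max_width M (elts (dual M ?E0))"
    using F' by (auto simp: foundation_def intro: max_width_mono)
  have mw0: "max_width M (elts ?E0)" using F by (simp add: foundation_def)
  obtain Z where Z: "\<And>n. Z n \<in> elts ?E0" "\<And>n w. 0 \<le> Z n w \<and> Z n w \<le> \<bar>x w\<bar>"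
    and mono: "\<And>n m w. n \<le> m \<Longrightarrow> Z n w \<le> Z m w"
    and approx: "\<And>n. nrm ?G (\<lambda>w. \<bar>x w\<bar> - Z n w) < 1 / Suc n"
    using ocpart_bidual_incseq_approx[OF E0 mw0 x] by blast
  have ZE: "Z n \<in> elts E" for n using Z(1) by (simp add: ocpart_def)
  obtain z where z: "z \<in> elts E" and lim: "(\<lambda>n. nrm E (\<lambda>w. Z n w - z w)) \<longlonglongrightarrow> 0"
    and below: "\<And>n. AE w in M. Z n w \<le> z w"
    using BIS_incseq_limit[of M E Z, OF E ZE mono ocpart_approx_Cauchy[OF E F dsp xG Z approx]] by blast
  have "AE w in M. \<bar>x w\<bar> \<le> \<bar>z w\<bar>"
    using bidual_approx_dominated[OF E0 mw xG normed_ideal_measurable[OF E0 Z(1)] Z(2) approx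
        normed_ideal_measurable[OF EI z] below] .
  then have xE: "x \<in> elts E \<and> nrm E x \<le> nrm E z"
    using solidD[OF normed_idealD(7)[OF EI] z dual_memD(1)[OF xG]] by blast
  have "nrm E z - nrm ?G x \<le> nrm E (\<lambda>w. Z n w - z w)" for n
  proof -
    have "nrm E z \<le> nrm E (Z n) + nrm E (\<lambda>w. -1 * (Z n w - z w))"
      using BIS_triangle[OF E ZE[of n] normed_idealD(4)[OF EI normed_ideal_diff[OF EI ZE[of n] z], of "-1"]]
      by simp
    also have "nrm E (Z n) \<le> nrm ?G (Z n)" by (rule nrm_le_bidual_nrm_ocpart[OF E F dsp Z(1)])
    also have "\<dots> \<le> nrm ?G x"
      using Z(2) normed_ideal_measurable[OF E0 Z(1)]
      by (intro conjunct2[OF solidD[OF normed_idealD(7)[OF G] xG]] AE_I2) auto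
    finally show ?thesis using normed_idealD(6)[OF EI normed_ideal_diff[OF EI ZE[of n] z], of "-1"] by simp
  qed
  then have "nrm E z - nrm ?G x \<le> 0" by (intro LIMSEQ_le_const[OF lim]) blast
  with xE show ?thesis by simp
qed

theorem theorem9:
  fixes M :: "'a measure" and E F :: "'a ispace"
  assumes "admissible M" and "J0 M E" and "J0 M F"
  shows "(subset1 E F \<longrightarrow> subset1 (dual M (ocpart M F)) (dual M (ocpart M E)))
       \<and> (subset1 F E \<longrightarrow> subset1 (ocpart M (dual M E)) (ocpart M (dual M F)))
       \<and> subset1 (ocpart M (dual M (dual M (ocpart M E)))) E
       \<and> subset1 F (dual M (ocpart M (dual M F)))"
proof (intro conjI impI)
  have JE: "BIS M E" "foundation M (ocpart M E) E" using assms(2) by (simp_all add: J0_def)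
  have JF: "BIS M F" "foundation M (ocpart M (dual M F)) (dual M F)" using assms(3) by (simp_all add: J0_def)
  have E: "normed_ideal M E" and F: "normed_ideal M F" using JE JF by (simp_all add: BIS_normed_ideal)
  have E0: "normed_ideal M (ocpart M E)" using ocpart_normed_ideal[OF E JE(2)] .
  have F'0: "normed_ideal M (ocpart M (dual M F))" using ocpart_normed_ideal[OF normed_ideal_dual[OF F] JF(2)] .
  show "subset1 (dual M (ocpart M F)) (dual M (ocpart M E))" if "subset1 E F"
    using dual_antimono[OF E0 ocpart_mono[OF normed_idealD(7)[OF E] that]] .
  show "subset1 (ocpart M (dual M E)) (ocpart M (dual M F))" if "subset1 F E"
    using ocpart_mono[OF dual_solid[OF E] dual_antimono[OF F that]] .
  have "direct_sum_property M" using assms(1) by (simp add: admissible_def)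
  then show "subset1 (ocpart M (dual M (dual M (ocpart M E)))) E"
    using ocpart_bidual_ocpart_mem[OF _ assms(2)] unfolding subset1_def nrm_ocpart by blast
  show "subset1 F (dual M (ocpart M (dual M F)))"
    using subset1_trans[OF subset1_bidual[OF F] dual_antimono[OF F'0 subset1_ocpart]] .
qed

end
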